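(* Let $N$ be a $d$-small $\mathrm{FS}_B^{\mathrm{op}}$-module and $M_1,\dots,M_p$ be $\mathrm{FS}_A^{\mathrm{op}}$-modules (all over $\mathbb C$) with $M_i$ $c_i$-small. Let $R$ be the $\mathrm{FS}_B^{\mathrm{op}}$-module with $$R(E,\sigma)=\bigoplus_{\varphi:(E,\sigma)\to[-p,p]}N(\varphi^{-1}(0),\sigma)\otimes M_1(\varphi^{-1}(1))\otimes\cdots\otimes M_p(\varphi^{-1}(p)),$$ the sum over all $\mathrm{FS}_B$-morphisms $\varphi$, where a morphism $\psi:(E',\sigma')\to(E,\sigma)$ maps the summand indexed by $\varphi$ to the summand indexed by $\varphi\circ\psi$ via $N(\psi|)\otimes M_1(\psi|)\otimes\cdots\otimes M_p(\psi|)$, $\psi|$ denoting the restrictions $(\varphi\psi)^{-1}(0)\to\varphi^{-1}(0)$ and $(\varphi\psi)^{-1}(i)\to\varphi^{-1}(i)$. Then $R$ is $(d+c_1+\cdots+c_p)$-small.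
   Context: $\mathrm{FS}_A$: nonempty finite sets with surjections. $\mathrm{FS}_B$: pairs $(E,\sigma)$, $E$ finite, $\sigma$ an involution with unique fixed point $0$, morphisms surjective equivariant maps; $[-n,n]=\{-n,\dots,n\}$ with $k\mapsto -k$; for a morphism $\varphi$, $(\varphi^{-1}(0),\sigma)$ is an object of $\mathrm{FS}_B$. A $\mathcal C^{\mathrm{op}}$-module is a contravariant functor to vector spaces; the principal projective $P_x(y)$ has basis $\mathrm{Hom}(y,x)$. An $\mathrm{FS}_A^{\mathrm{op}}$-module is finitely generated in degree $\le d$ if it is a quotient of a finite sum of $P_{[m]}$ with $m\le d$ ($[m]=\{1,\dots,m\}$); an $\mathrm{FS}_B^{\mathrm{op}}$-module is finitely generated in degree $\le d$ if it is a quotient of a finite sum of $P_{[-m,m]}$ with $m\le d$. A module is $d$-small if it is isomorphic to a subquotient of a module finitely generated in degree $\le d$. *)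

theory Defs
  imports Complex_Main "HOL-Library.FuncSet"
begin

definition fn_subspace :: "('a \<Rightarrow> complex) set \<Rightarrow> bool" where
  "fn_subspace S \<longleftrightarrow> (\<lambda>_. 0) \<in> S \<and>
     (\<forall>x\<in>S. \<forall>y\<in>S. (\<lambda>a. x a + y a) \<in> S) \<and>
     (\<forall>c. \<forall>x\<in>S. (\<lambda>a. c * x a) \<in> S)"

definition fn_linear_on :: "('a \<Rightarrow> complex) set \<Rightarrow> ('b \<Rightarrow> complex) set
    \<Rightarrow> (('a \<Rightarrow> complex) \<Rightarrow> ('b \<Rightarrow> complex)) \<Rightarrow> bool" where
  "fn_linear_on S T h \<longleftrightarrow> (\<forall>x\<in>S. h x \<in> T) \<and>
     (\<forall>x\<in>S. \<forall>y\<in>S. h (\<lambda>a. x a + y a) = (\<lambda>a. h x a + h y a)) \<and>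
     (\<forall>c. \<forall>x\<in>S. h (\<lambda>a. c * x a) = (\<lambda>a. c * h x a))"

definition fn_span :: "('a \<Rightarrow> complex) set \<Rightarrow> ('a \<Rightarrow> complex) set" where
  "fn_span S = {(\<lambda>z. \<Sum>j<(n::nat). c j * u j z) | n c u. \<forall>j<n. u j \<in> S}"

text \<open>A category is given by an object predicate, hom sets, composition
  (cmp X g f = g o f for f : X -> Y, g : Y -> Z) and identities.\<close>

definition is_module ::
  "('o \<Rightarrow> bool) \<Rightarrow> ('o \<Rightarrow> 'o \<Rightarrow> 'h set) \<Rightarrow> ('o \<Rightarrow> 'h \<Rightarrow> 'h \<Rightarrow> 'h) \<Rightarrow> ('o \<Rightarrow> 'h)
   \<Rightarrow> ('o \<Rightarrow> ('a \<Rightarrow> complex) set)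
   \<Rightarrow> ('o \<Rightarrow> 'o \<Rightarrow> 'h \<Rightarrow> ('a \<Rightarrow> complex) \<Rightarrow> ('a \<Rightarrow> complex)) \<Rightarrow> bool" where
  "is_module obj hom cmp idm Mob Mmor \<longleftrightarrow>
     (\<forall>X. obj X \<longrightarrow> fn_subspace (Mob X)) \<and>
     (\<forall>X Y f. obj X \<longrightarrow> obj Y \<longrightarrow> f \<in> hom X Y \<longrightarrow> fn_linear_on (Mob Y) (Mob X) (Mmor X Y f)) \<and>
     (\<forall>X. obj X \<longrightarrow> (\<forall>v\<in>Mob X. Mmor X X (idm X) v = v)) \<and>
     (\<forall>X Y Z f g. obj X \<longrightarrow> obj Y \<longrightarrow> obj Z \<longrightarrow> f \<in> hom X Y \<longrightarrow> g \<in> hom Y Z \<longrightarrow>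
        (\<forall>v\<in>Mob Z. Mmor X Z (cmp X g f) v = Mmor X Y f (Mmor Y Z g v)))"

text \<open>The direct sum of principal projectives P_{gens!0} + ... + P_{gens!(k-1)}:
  at Y it has basis the pairs (i, f) with f in hom Y (gens!i).\<close>

definition free_ob :: "('o \<Rightarrow> 'o \<Rightarrow> 'h set) \<Rightarrow> 'o list \<Rightarrow> 'o \<Rightarrow> (nat \<times> 'h \<Rightarrow> complex) set" where
  "free_ob hom gens Y = {v. \<forall>i f. v (i, f) \<noteq> 0 \<longrightarrow> i < length gens \<and> f \<in> hom Y (gens ! i)}"

definition free_mor :: "('o \<Rightarrow> 'o \<Rightarrow> 'h set) \<Rightarrow> ('o \<Rightarrow> 'h \<Rightarrow> 'h \<Rightarrow> 'h) \<Rightarrow> 'o list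
    \<Rightarrow> 'o \<Rightarrow> 'o \<Rightarrow> 'h \<Rightarrow> (nat \<times> 'h \<Rightarrow> complex) \<Rightarrow> (nat \<times> 'h \<Rightarrow> complex)" where
  "free_mor hom cmp gens Y' Y h v = (\<lambda>(i, f').
     if i < length gens then (\<Sum>f\<in>{f \<in> hom Y (gens ! i). cmp Y' f h = f'}. v (i, f)) else 0)"

definition is_submodule ::
  "('o \<Rightarrow> bool) \<Rightarrow> ('o \<Rightarrow> 'o \<Rightarrow> 'h set) \<Rightarrow> ('o \<Rightarrow> ('a \<Rightarrow> complex) set)
   \<Rightarrow> ('o \<Rightarrow> 'o \<Rightarrow> 'h \<Rightarrow> ('a \<Rightarrow> complex) \<Rightarrow> ('a \<Rightarrow> complex))
   \<Rightarrow> ('o \<Rightarrow> ('a \<Rightarrow> complex) set) \<Rightarrow> bool" where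
  "is_submodule obj hom Mob Mmor S \<longleftrightarrow>
     (\<forall>X. obj X \<longrightarrow> fn_subspace (S X) \<and> S X \<subseteq> Mob X) \<and>
     (\<forall>X Y f. obj X \<longrightarrow> obj Y \<longrightarrow> f \<in> hom X Y \<longrightarrow> Mmor X Y f ` S Y \<subseteq> S X)"

definition is_epi ::
  "('o \<Rightarrow> bool) \<Rightarrow> ('o \<Rightarrow> 'o \<Rightarrow> 'h set)
   \<Rightarrow> ('o \<Rightarrow> ('a \<Rightarrow> complex) set) \<Rightarrow> ('o \<Rightarrow> 'o \<Rightarrow> 'h \<Rightarrow> ('a \<Rightarrow> complex) \<Rightarrow> ('a \<Rightarrow> complex))
   \<Rightarrow> ('o \<Rightarrow> ('b \<Rightarrow> complex) set) \<Rightarrow> ('o \<Rightarrow> 'o \<Rightarrow> 'h \<Rightarrow> ('b \<Rightarrow> complex) \<Rightarrow> ('b \<Rightarrow> complex))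
   \<Rightarrow> ('o \<Rightarrow> ('a \<Rightarrow> complex) \<Rightarrow> ('b \<Rightarrow> complex)) \<Rightarrow> bool" where
  "is_epi obj hom Sob Smor Mob Mmor \<eta> \<longleftrightarrow>
     (\<forall>X. obj X \<longrightarrow> fn_linear_on (Sob X) (Mob X) (\<eta> X) \<and> \<eta> X ` Sob X = Mob X) \<and>
     (\<forall>X Y f. obj X \<longrightarrow> obj Y \<longrightarrow> f \<in> hom X Y \<longrightarrow>
        (\<forall>v\<in>Sob Y. \<eta> X (Smor X Y f v) = Mmor X Y f (\<eta> Y v)))"

text \<open>d-small: isomorphic to a subquotient of a module finitely generated in degree \<le> d,
  i.e. the image of an epimorphism from a submodule S of a module F which itself is a
  quotient of a finite sum of P_{gen m}, m \<le> d.  Since a subquotient of a quotient of F0 is a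
  subquotient of F0, we take F = the finite sum of principal projectives directly.\<close>

definition small ::
  "('o \<Rightarrow> bool) \<Rightarrow> ('o \<Rightarrow> 'o \<Rightarrow> 'h set) \<Rightarrow> ('o \<Rightarrow> 'h \<Rightarrow> 'h \<Rightarrow> 'h)
   \<Rightarrow> (nat \<Rightarrow> 'o) \<Rightarrow> nat \<Rightarrow> nat
   \<Rightarrow> ('o \<Rightarrow> ('a \<Rightarrow> complex) set) \<Rightarrow> ('o \<Rightarrow> 'o \<Rightarrow> 'h \<Rightarrow> ('a \<Rightarrow> complex) \<Rightarrow> ('a \<Rightarrow> complex))
   \<Rightarrow> bool" where
  "small obj hom cmp gen lo d Mob Mmor \<longleftrightarrow>
     (\<exists>ms. (\<forall>m\<in>set ms. lo \<le> m \<and> m \<le> d) \<and>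
       (\<exists>S. is_submodule obj hom (free_ob hom (map gen ms)) (free_mor hom cmp (map gen ms)) S \<and>
         (\<exists>\<eta>. is_epi obj hom S (free_mor hom cmp (map gen ms)) Mob Mmor \<eta>)))"

definition fsA_obj :: "int set \<Rightarrow> bool" where
  "fsA_obj X \<longleftrightarrow> finite X \<and> X \<noteq> {}"

definition fsA_hom :: "int set \<Rightarrow> int set \<Rightarrow> (int \<Rightarrow> int) set" where
  "fsA_hom X Y = {f \<in> X \<rightarrow>\<^sub>E Y. f ` X = Y}"

definition fsA_comp :: "int set \<Rightarrow> (int \<Rightarrow> int) \<Rightarrow> (int \<Rightarrow> int) \<Rightarrow> (int \<Rightarrow> int)" where
  "fsA_comp X g f = compose X g f"

definition fsA_id :: "int set \<Rightarrow> (int \<Rightarrow> int)" where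
  "fsA_id X = restrict id X"

definition fsA_gen :: "nat \<Rightarrow> int set" where
  "fsA_gen m = {1..int m}"

type_synonym fsB_ob = "int set \<times> (int \<Rightarrow> int)"

definition fsB_obj :: "fsB_ob \<Rightarrow> bool" where
  "fsB_obj Es \<longleftrightarrow> (let E = fst Es; \<sigma> = snd Es in
     finite E \<and> 0 \<in> E \<and> \<sigma> \<in> E \<rightarrow>\<^sub>E E \<and> (\<forall>x\<in>E. \<sigma> (\<sigma> x) = x) \<and>
     (\<forall>x\<in>E. \<sigma> x = x \<longleftrightarrow> x = 0))"

definition fsB_hom :: "fsB_ob \<Rightarrow> fsB_ob \<Rightarrow> (int \<Rightarrow> int) set" where
  "fsB_hom Es Fs = {f \<in> fst Es \<rightarrow>\<^sub>E fst Fs. f ` fst Es = fst Fs \<and>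
     (\<forall>x\<in>fst Es. f (snd Es x) = snd Fs (f x))}"

definition fsB_comp :: "fsB_ob \<Rightarrow> (int \<Rightarrow> int) \<Rightarrow> (int \<Rightarrow> int) \<Rightarrow> (int \<Rightarrow> int)" where
  "fsB_comp Es g f = compose (fst Es) g f"

definition fsB_id :: "fsB_ob \<Rightarrow> (int \<Rightarrow> int)" where
  "fsB_id Es = restrict id (fst Es)"

definition fsB_gen :: "nat \<Rightarrow> fsB_ob" where
  "fsB_gen n = ({- int n..int n}, restrict uminus {- int n..int n})"

abbreviation fsA_module where
  "fsA_module \<equiv> is_module fsA_obj fsA_hom fsA_comp fsA_id"
abbreviation fsB_module where
  "fsB_module \<equiv> is_module fsB_obj fsB_hom fsB_comp fsB_id"
abbreviation fsA_small where
  "fsA_small d \<equiv> small fsA_obj fsA_hom fsA_comp fsA_gen 1 d"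
abbreviation fsB_small where
  "fsB_small d \<equiv> small fsB_obj fsB_hom fsB_comp fsB_gen 0 d"

definition fib :: "(int \<Rightarrow> int) \<Rightarrow> int set \<Rightarrow> int \<Rightarrow> int set" where
  "fib \<phi> E i = {x \<in> E. \<phi> x = i}"

definition fibB :: "(int \<Rightarrow> int) \<Rightarrow> fsB_ob \<Rightarrow> fsB_ob" where
  "fibB \<phi> Es = (fib \<phi> (fst Es) 0, restrict (snd Es) (fib \<phi> (fst Es) 0))"

text \<open>Elementary tensor v (x) w_1 (x) ... (x) w_p of functions, as a function on
  'b x 'a list; the algebraic tensor product of function spaces embeds this way.\<close>
definition elem_tensor :: "('b \<Rightarrow> complex) \<Rightarrow> ('a \<Rightarrow> complex) list \<Rightarrow> ('b \<times> 'a list \<Rightarrow> complex)" where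
  "elem_tensor v ws = (\<lambda>(b, xs). if length xs = length ws
      then v b * (\<Prod>i<length ws. (ws ! i) (xs ! i)) else 0)"

definition tensor_space :: "('b \<Rightarrow> complex) set \<Rightarrow> ('a \<Rightarrow> complex) set list \<Rightarrow> ('b \<times> 'a list \<Rightarrow> complex) set" where
  "tensor_space V Ws = fn_span {elem_tensor v ws | v ws. v \<in> V \<and> length ws = length Ws \<and>
       (\<forall>i<length Ws. ws ! i \<in> Ws ! i)}"

type_synonym 'a fsA_mod =
  "(int set \<Rightarrow> ('a \<Rightarrow> complex) set) \<times> (int set \<Rightarrow> int set \<Rightarrow> (int \<Rightarrow> int) \<Rightarrow> ('a \<Rightarrow> complex) \<Rightarrow> ('a \<Rightarrow> complex))"

text \<open>R(E, sigma) = direct sum over phi : (E,sigma) -> [-p,p] of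
  N(phi^{-1}(0)) (x) M_1(phi^{-1}(1)) (x) ... (x) M_p(phi^{-1}(p));
  here Ms ! i is M_{i+1}.\<close>
definition R_ob :: "(fsB_ob \<Rightarrow> ('b \<Rightarrow> complex) set) \<Rightarrow> 'a fsA_mod list
    \<Rightarrow> fsB_ob \<Rightarrow> ((int \<Rightarrow> int) \<times> 'b \<times> 'a list \<Rightarrow> complex) set" where
  "R_ob Nob Ms Es = {g.
     (\<forall>\<phi> b xs. g (\<phi>, b, xs) \<noteq> 0 \<longrightarrow> \<phi> \<in> fsB_hom Es (fsB_gen (length Ms))) \<and>
     (\<forall>\<phi>\<in>fsB_hom Es (fsB_gen (length Ms)).
        (\<lambda>(b, xs). g (\<phi>, b, xs)) \<in> tensor_space (Nob (fibB \<phi> Es))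
           (map (\<lambda>i. fst (Ms ! i) (fib \<phi> (fst Es) (int i + 1))) [0..<length Ms]))}"

definition summand_inj :: "(int \<Rightarrow> int) \<Rightarrow> ('b \<times> 'a list \<Rightarrow> complex) \<Rightarrow> ((int \<Rightarrow> int) \<times> 'b \<times> 'a list \<Rightarrow> complex)" where
  "summand_inj \<phi> t = (\<lambda>(\<phi>', b, xs). if \<phi>' = \<phi> then t (b, xs) else 0)"

text \<open>These conditions determine R(psi) uniquely (R(E,sigma) is spanned by such tensors).\<close>
definition R_mor_spec :: "(fsB_ob \<Rightarrow> ('b \<Rightarrow> complex) set)
    \<Rightarrow> (fsB_ob \<Rightarrow> fsB_ob \<Rightarrow> (int \<Rightarrow> int) \<Rightarrow> ('b \<Rightarrow> complex) \<Rightarrow> ('b \<Rightarrow> complex))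
    \<Rightarrow> 'a fsA_mod list
    \<Rightarrow> (fsB_ob \<Rightarrow> fsB_ob \<Rightarrow> (int \<Rightarrow> int) \<Rightarrow> ((int \<Rightarrow> int) \<times> 'b \<times> 'a list \<Rightarrow> complex)
          \<Rightarrow> ((int \<Rightarrow> int) \<times> 'b \<times> 'a list \<Rightarrow> complex)) \<Rightarrow> bool" where
  "R_mor_spec Nob Nmor Ms Rmor \<longleftrightarrow>
    (\<forall>Es' Es \<psi>. fsB_obj Es' \<longrightarrow> fsB_obj Es \<longrightarrow> \<psi> \<in> fsB_hom Es' Es \<longrightarrow>
       fn_linear_on (R_ob Nob Ms Es) (R_ob Nob Ms Es') (Rmor Es' Es \<psi>) \<and>
       (\<forall>\<phi> v ws. \<phi> \<in> fsB_hom Es (fsB_gen (length Ms)) \<longrightarrow>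
          v \<in> Nob (fibB \<phi> Es) \<longrightarrow> length ws = length Ms \<longrightarrow>
          (\<forall>i<length Ms. ws ! i \<in> fst (Ms ! i) (fib \<phi> (fst Es) (int i + 1))) \<longrightarrow>
          (let \<chi> = compose (fst Es') \<phi> \<psi> in
           Rmor Es' Es \<psi> (summand_inj \<phi> (elem_tensor v ws)) =
           summand_inj \<chi> (elem_tensor
              (Nmor (fibB \<chi> Es') (fibB \<phi> Es) (restrict \<psi> (fib \<chi> (fst Es') 0)) v)
              (map (\<lambda>i. snd (Ms ! i) (fib \<chi> (fst Es') (int i + 1)) (fib \<phi> (fst Es) (int i + 1))
                          (restrict \<psi> (fib \<chi> (fst Es') (int i + 1))) (ws ! i))
                   [0..<length Ms])))))"

end

(*
  Present N and the M_i as quotients of submodules of finite sums of principal projectives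
  P_[-a,a] (a <= d) and P_[a] (a <= c_i).  A morphism (E, sigma) -> [-n, n] with
  n = a_0 + ... + a_p amounts to a morphism phi : (E, sigma) -> [-p, p] (telling which block of
  [-n, n] a point lands in) together with a morphism phi^-1(0) -> [-a_0, a_0] and surjections
  phi^-1(i) -> [a_i].  Hence the construction R applied to principal projectives
  P_[-a_0,a_0], P_[a_1], ..., P_[a_p] yields the principal projective P_[-n,n], and applied to the
  chosen submodules it yields a submodule of a finite sum of principal projectives of degree
  at most d + c_1 + ... + c_p.  Applying the given epimorphisms factorwise maps that submodule
  onto R, so R is (d + c_1 + ... + c_p)-small.
*)
theory Submission
  imports Defs
begin

section \<open>Spans and linear maps of function spaces\<close>

lemma fn_span_sum_list:
  "fn_span S = {(\<lambda>z. \<Sum>(c,u)\<leftarrow>L. c * u z) | L. \<forall>p\<in>set L. snd p \<in> S}"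
proof (intro set_eqI iffI)
  fix x assume "x \<in> fn_span S"
  then obtain n c u where x: "x = (\<lambda>z. \<Sum>j<(n::nat). c j * u j z)" and u: "\<forall>j<n. u j \<in> S"
    unfolding fn_span_def by blast
  let ?L = "map (\<lambda>j. (c j, u j)) [0..<n]"
  have "x = (\<lambda>z. \<Sum>(c,u)\<leftarrow>?L. c * u z)"
    unfolding x by (simp add: o_def interv_sum_list_conv_sum_set_nat atLeast0LessThan)
  moreover have "\<forall>p\<in>set ?L. snd p \<in> S" using u by auto
  ultimately show "x \<in> {(\<lambda>z. \<Sum>(c,u)\<leftarrow>L. c * u z) | L. \<forall>p\<in>set L. snd p \<in> S}" by blast
next
  fix x assume "x \<in> {(\<lambda>z. \<Sum>(c,u)\<leftarrow>L. c * u z) | L. \<forall>p\<in>set L. snd p \<in> S}"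
  then obtain L where x: "x = (\<lambda>z. \<Sum>(c,u)\<leftarrow>L. c * u z)" and L: "\<forall>p\<in>set L. snd p \<in> S" by blast
  have "x = (\<lambda>z. \<Sum>j<length L. fst (L!j) * snd (L!j) z)"
    unfolding x by (simp add: sum_list_sum_nth atLeast0LessThan case_prod_beta)
  moreover have "\<forall>j<length L. snd (L!j) \<in> S" using L by auto
  ultimately show "x \<in> fn_span S" unfolding fn_span_def
    by (intro CollectI exI[of _ "length L"] exI[of _ "\<lambda>j. fst (L!j)"] exI[of _ "\<lambda>j. snd (L!j)"]) simp
qed

lemma fn_span_subspace:
  fixes S :: "('a \<Rightarrow> complex) set"
  shows "fn_subspace (fn_span S)"
proof -
  define comb :: "(complex \<times> ('a \<Rightarrow> complex)) list \<Rightarrow> 'a \<Rightarrow> complex"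
    where "comb L = (\<lambda>z. \<Sum>(c,u)\<leftarrow>L. c * u z)" for L
  have span: "fn_span S = comb ` {L. \<forall>p\<in>set L. snd p \<in> S}"
    unfolding comb_def fn_span_sum_list by blast
  have "(\<lambda>_. 0) = comb []" "(\<lambda>a. comb L1 a + comb L2 a) = comb (L1 @ L2)"
    "(\<lambda>a. k * comb L1 a) = comb (map (\<lambda>(c,u). (k*c,u)) L1)" for L1 L2 k
    by (simp_all add: comb_def sum_list_const_mult[symmetric] o_def case_prod_beta mult.assoc)
  note comb = this
  show ?thesis
    unfolding fn_subspace_def span
  proof (intro conjI ballI allI)
    show "(\<lambda>_. 0) \<in> comb ` {L. \<forall>p\<in>set L. snd p \<in> S}"
      unfolding comb(1) by (rule imageI) simp
  next
    fix x y assume "x \<in> comb ` {L. \<forall>p\<in>set L. snd p \<in> S}" "y \<in> comb ` {L. \<forall>p\<in>set L. snd p \<in> S}"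
    then show "(\<lambda>a. x a + y a) \<in> comb ` {L. \<forall>p\<in>set L. snd p \<in> S}"
      by (force simp: comb(2) intro!: imageI)
  next
    fix k x assume "x \<in> comb ` {L. \<forall>p\<in>set L. snd p \<in> S}"
    then show "(\<lambda>a. k * x a) \<in> comb ` {L. \<forall>p\<in>set L. snd p \<in> S}"
      by (force simp: comb(3) intro!: imageI)
  qed
qed

lemma fn_span_superset: "u \<in> S \<Longrightarrow> u \<in> fn_span S"
  unfolding fn_span_sum_list by (intro CollectI exI[of _ "[(1,u)]"]) auto

lemma fn_subspace_add: "fn_subspace V \<Longrightarrow> x \<in> V \<Longrightarrow> y \<in> V \<Longrightarrow> (\<lambda>a. x a + y a) \<in> V"
  and fn_subspace_scale: "fn_subspace V \<Longrightarrow> x \<in> V \<Longrightarrow> (\<lambda>a. c * x a) \<in> V"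
  and fn_subspace_zero: "fn_subspace V \<Longrightarrow> (\<lambda>a. 0) \<in> V"
  by (simp_all add: fn_subspace_def)

lemma fn_linear_on_add: "fn_linear_on V W h \<Longrightarrow> x \<in> V \<Longrightarrow> y \<in> V \<Longrightarrow> h (\<lambda>a. x a + y a) = (\<lambda>a. h x a + h y a)"
  and fn_linear_on_scale: "fn_linear_on V W h \<Longrightarrow> x \<in> V \<Longrightarrow> h (\<lambda>a. c * x a) = (\<lambda>a. c * h x a)"
  and fn_linear_on_in: "fn_linear_on V W h \<Longrightarrow> x \<in> V \<Longrightarrow> h x \<in> W"
  by (simp_all add: fn_linear_on_def)

lemma fn_linear_on_zero: "fn_linear_on V W h \<Longrightarrow> fn_subspace V \<Longrightarrow> h (\<lambda>a. 0) = (\<lambda>a. 0)"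
  using fn_linear_on_scale[of V W h "\<lambda>a. 0" 0] fn_subspace_zero[of V] by simp

lemma fn_linear_on_sum_list:
  assumes h: "fn_linear_on V W h" and V: "fn_subspace V"
    and xs: "\<forall>x\<in>set xs. cf x \<noteq> 0 \<longrightarrow> uf x \<in> V"
  shows "(\<lambda>a. \<Sum>x\<leftarrow>xs. cf x * uf x a) \<in> V \<and>
    h (\<lambda>a. \<Sum>x\<leftarrow>xs. cf x * uf x a) = (\<lambda>a. \<Sum>x\<leftarrow>xs. cf x * h (uf x) a)"
  using xs
proof (induction xs)
  case Nil
  then show ?case using fn_linear_on_zero[OF h V] fn_subspace_zero[OF V] by simp
next
  case (Cons x xs)
  then have IH: "(\<lambda>a. \<Sum>x\<leftarrow>xs. cf x * uf x a) \<in> V"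
    "h (\<lambda>a. \<Sum>x\<leftarrow>xs. cf x * uf x a) = (\<lambda>a. \<Sum>x\<leftarrow>xs. cf x * h (uf x) a)"
    by simp_all
  show ?case
  proof (cases "cf x = 0")
    case False
    then have u: "uf x \<in> V" using Cons.prems by simp
    have cu: "(\<lambda>a. cf x * uf x a) \<in> V" using fn_subspace_scale[OF V u] .
    show ?thesis
      using fn_subspace_add[OF V cu IH(1)] fn_linear_on_add[OF h cu IH(1)] fn_linear_on_scale[OF h u] IH(2)
      by simp
  qed (use IH in simp)
qed

section \<open>Cutting [-n, n] into blocks\<close>

text \<open>For sizes \<open>A 0, A 1, \<dots>, A p\<close> and \<open>n = A 0 + \<dots> + A p\<close>, the interval \<open>[-n, n]\<close> is cut
  into the centre \<open>[-A 0, A 0]\<close>, the blocks \<open>(block_start A m, block_start A (m + 1)]\<close> of size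
  \<open>A m\<close> for \<open>1 \<le> m \<le> p\<close>, and their negatives; \<open>block_index A p w\<close> is the signed number of
  the piece containing \<open>w\<close>.\<close>

definition block_start :: "(nat \<Rightarrow> nat) \<Rightarrow> nat \<Rightarrow> nat" where
  "block_start A m = (\<Sum>l<m. A l)"

definition block_index :: "(nat \<Rightarrow> nat) \<Rightarrow> nat \<Rightarrow> int \<Rightarrow> int" where
  "block_index A p w = sgn w * int (card {m. 1 \<le> m \<and> m \<le> p \<and> int (block_start A m) < \<bar>w\<bar>})"

lemma block_start_Suc: "block_start A (Suc m) = block_start A m + A m"
  by (simp add: block_start_def)

lemma block_start_mono: "m \<le> m' \<Longrightarrow> block_start A m \<le> block_start A m'"
  unfolding block_start_def by (rule sum_mono2) auto

lemma block_start_1: "block_start A 1 = A 0"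
  by (simp add: block_start_def)

lemma block_index_uminus: "block_index A p (- w) = - block_index A p w"
  by (simp add: block_index_def sgn_minus)

lemma block_index_eq_0: "\<bar>w\<bar> \<le> int (block_start A 1) \<Longrightarrow> block_index A p w = 0"
proof -
  assume a: "\<bar>w\<bar> \<le> int (block_start A 1)"
  have "\<forall>m. \<not> (1 \<le> m \<and> m \<le> p \<and> int (block_start A m) < \<bar>w\<bar>)"
  proof (intro allI notI)
    fix m assume m: "1 \<le> m \<and> m \<le> p \<and> int (block_start A m) < \<bar>w\<bar>"
    then have "block_start A 1 \<le> block_start A m" by (intro block_start_mono) simp
    with m a show False by linarith
  qed
  then have "{m. 1 \<le> m \<and> m \<le> p \<and> int (block_start A m) < \<bar>w\<bar>} = {}" by blast
  then show ?thesis by (simp add: block_index_def)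
qed

lemma block_index_eq:
  assumes "1 \<le> m" "m \<le> p" "int (block_start A m) < \<bar>w\<bar>" "\<bar>w\<bar> \<le> int (block_start A (Suc m))"
  shows "block_index A p w = sgn w * int m"
proof -
  have "{l. 1 \<le> l \<and> l \<le> p \<and> int (block_start A l) < \<bar>w\<bar>} = {1..m}"
  proof (intro set_eqI iffI)
    fix l assume "l \<in> {l. 1 \<le> l \<and> l \<le> p \<and> int (block_start A l) < \<bar>w\<bar>}"
    then have l: "1 \<le> l" "l \<le> p" "int (block_start A l) < \<bar>w\<bar>" by auto
    have "l \<le> m"
    proof (rule ccontr)
      assume "\<not> l \<le> m"
      then have "Suc m \<le> l" by simp
      with block_start_mono[of "Suc m" l A] assms l show False by linarith
    qed
    then show "l \<in> {1..m}" using l by auto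
  next
    fix l assume l: "l \<in> {1..m}"
    then have "block_start A l \<le> block_start A m" using block_start_mono[of l m A] by auto
    then show "l \<in> {l. 1 \<le> l \<and> l \<le> p \<and> int (block_start A l) < \<bar>w\<bar>}"
      using assms l by auto
  qed
  then show ?thesis by (simp add: block_index_def)
qed

lemma block_cover:
  "\<bar>w\<bar> \<le> int (block_start A (Suc p)) \<Longrightarrow> \<bar>w\<bar> \<le> int (block_start A 1) \<or>
     (\<exists>m. 1 \<le> m \<and> m \<le> p \<and> int (block_start A m) < \<bar>w\<bar> \<and> \<bar>w\<bar> \<le> int (block_start A (Suc m)))"
proof (induction p)
  case 0
  then show ?case by simp
next
  case (Suc p)
  show ?case
  proof (cases "\<bar>w\<bar> \<le> int (block_start A (Suc p))")
    case True
    from Suc.IH[OF True] show ?thesis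
      using le_SucI by blast
  next
    case False
    then show ?thesis using Suc.prems
      by (intro disjI2 exI[of _ "Suc p"]) auto
  qed
qed

lemma abs_block_index_le: "\<bar>block_index A p w\<bar> \<le> int p"
proof -
  have "card {m. 1 \<le> m \<and> m \<le> p \<and> int (block_start A m) < \<bar>w\<bar>} \<le> card {1..p}"
    by (rule card_mono) auto
  then show ?thesis unfolding block_index_def abs_mult by (simp add: abs_sgn_eq)
qed

lemma block_index_eq_0_iff:
  assumes "\<bar>w\<bar> \<le> int (block_start A (Suc p))"
  shows "block_index A p w = 0 \<longleftrightarrow> \<bar>w\<bar> \<le> int (block_start A 1)"
proof
  assume c: "block_index A p w = 0"
  show "\<bar>w\<bar> \<le> int (block_start A 1)"
  proof (rule ccontr)
    assume n: "\<not> \<bar>w\<bar> \<le> int (block_start A 1)"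
    then obtain m where m: "1 \<le> m" "m \<le> p" "int (block_start A m) < \<bar>w\<bar>" "\<bar>w\<bar> \<le> int (block_start A (Suc m))"
      using block_cover[OF assms] by blast
    have "w \<noteq> 0" using n by auto
    then show False using block_index_eq[OF m] c m(1) by (auto simp: sgn_if split: if_splits)
  qed
qed (rule block_index_eq_0)

lemma block_index_eq_pos_iff:
  assumes "\<bar>w\<bar> \<le> int (block_start A (Suc p))" "1 \<le> m" "m \<le> p"
  shows "block_index A p w = int m \<longleftrightarrow> int (block_start A m) < w \<and> w \<le> int (block_start A (Suc m))"
proof
  assume c: "block_index A p w = int m"
  have "\<not> \<bar>w\<bar> \<le> int (block_start A 1)" using block_index_eq_0[of w A p] c assms by auto
  then obtain m' where m': "1 \<le> m'" "m' \<le> p" "int (block_start A m') < \<bar>w\<bar>" "\<bar>w\<bar> \<le> int (block_start A (Suc m'))"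
    using block_cover[OF assms(1)] by blast
  have w0: "w \<noteq> 0" using m' by auto
  have "sgn w * int m' = int m" using block_index_eq[OF m'] c by simp
  then have "w > 0 \<and> m' = m" using w0 m'(1) assms(2) by (auto simp: sgn_if split: if_splits)
  then show "int (block_start A m) < w \<and> w \<le> int (block_start A (Suc m))" using m' by auto
next
  assume "int (block_start A m) < w \<and> w \<le> int (block_start A (Suc m))"
  then have "int (block_start A m) < \<bar>w\<bar>" "\<bar>w\<bar> \<le> int (block_start A (Suc m))" "w > 0" by auto
  then show "block_index A p w = int m" using block_index_eq[OF assms(2,3)] by simp
qed

section \<open>The categories FS_A and FS_B\<close>

lemma mem_fib: "x \<in> fib \<phi> E i \<longleftrightarrow> x \<in> E \<and> \<phi> x = i"
  by (simp add: fib_def)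

lemma fsB_gen_simps: "fst (fsB_gen n) = {- int n..int n}" "v \<in> {- int n..int n} \<Longrightarrow> snd (fsB_gen n) v = - v"
  by (auto simp: fsB_gen_def)

lemma fsB_homD:
  assumes "f \<in> fsB_hom Es Fs"
  shows "f \<in> fst Es \<rightarrow>\<^sub>E fst Fs" "f ` fst Es = fst Fs" "\<And>x. x \<in> fst Es \<Longrightarrow> f (snd Es x) = snd Fs (f x)"
    "\<And>x. x \<in> fst Es \<Longrightarrow> f x \<in> fst Fs" "\<And>x. x \<notin> fst Es \<Longrightarrow> f x = undefined"
  using assms by (auto simp: fsB_hom_def PiE_iff extensional_def)

lemma fsB_homI:
  assumes "\<And>x. x \<in> fst Es \<Longrightarrow> f x \<in> fst Fs" "\<And>x. x \<notin> fst Es \<Longrightarrow> f x = undefined"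
    "\<And>y. y \<in> fst Fs \<Longrightarrow> \<exists>x\<in>fst Es. f x = y" "\<And>x. x \<in> fst Es \<Longrightarrow> f (snd Es x) = snd Fs (f x)"
  shows "f \<in> fsB_hom Es Fs"
  using assms unfolding fsB_hom_def by (auto simp: PiE_iff extensional_def image_def) (metis)

lemma fsA_homD:
  assumes "f \<in> fsA_hom X Y"
  shows "f \<in> X \<rightarrow>\<^sub>E Y" "f ` X = Y" "\<And>x. x \<in> X \<Longrightarrow> f x \<in> Y" "\<And>x. x \<notin> X \<Longrightarrow> f x = undefined"
  using assms by (auto simp: fsA_hom_def PiE_iff extensional_def)

lemma fsA_homI:
  assumes "\<And>x. x \<in> X \<Longrightarrow> f x \<in> Y" "\<And>x. x \<notin> X \<Longrightarrow> f x = undefined"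
    "\<And>y. y \<in> Y \<Longrightarrow> \<exists>x\<in>X. f x = y"
  shows "f \<in> fsA_hom X Y"
  using assms unfolding fsA_hom_def by (auto simp: PiE_iff extensional_def image_def) (metis)

lemma fsB_hom_extensional: "f \<in> fsB_hom X Y \<Longrightarrow> f \<in> extensional (fst X)"
  by (auto simp: fsB_hom_def PiE_def)

lemma fsA_hom_extensional: "f \<in> fsA_hom X Y \<Longrightarrow> f \<in> extensional X"
  by (auto simp: fsA_hom_def PiE_def)

lemma fsB_objD:
  assumes "fsB_obj Es"
  shows "finite (fst Es)" "0 \<in> fst Es" "\<And>x. x \<in> fst Es \<Longrightarrow> snd Es x \<in> fst Es"
    "\<And>x. x \<in> fst Es \<Longrightarrow> snd Es (snd Es x) = x" "\<And>x. x \<in> fst Es \<Longrightarrow> snd Es x = x \<longleftrightarrow> x = 0"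
    "\<And>x. x \<notin> fst Es \<Longrightarrow> snd Es x = undefined"
  using assms by (auto simp: fsB_obj_def Let_def PiE_iff extensional_def)

lemma fsB_gen_hom_uminus:
  assumes "\<phi> \<in> fsB_hom Es (fsB_gen p)" "x \<in> fst Es"
  shows "\<phi> (snd Es x) = - \<phi> x"
proof -
  have "\<phi> x \<in> {- int p..int p}" using fsB_homD(4)[OF assms(1,2)] by (simp add: fsB_gen_simps)
  then show ?thesis using fsB_homD(3)[OF assms] by (simp add: fsB_gen_simps)
qed

lemma fsB_gen_hom_abs_le:
  assumes "\<phi> \<in> fsB_hom Es (fsB_gen p)" "x \<in> fst Es"
  shows "\<bar>\<phi> x\<bar> \<le> int p"
  using fsB_homD(4)[OF assms] by (auto simp: fsB_gen_simps)

lemma fsB_gen_hom_surj: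
  assumes "\<phi> \<in> fsB_hom Es (fsB_gen p)" "\<bar>v\<bar> \<le> int p"
  shows "\<exists>x\<in>fst Es. \<phi> x = v"
proof -
  have "v \<in> fst (fsB_gen p)" using assms(2) by (auto simp: fsB_gen_simps)
  then show ?thesis using fsB_homD(2)[OF assms(1)] by (metis imageE)
qed

lemma fsB_gen_hom_0:
  assumes "fsB_obj Es" "\<phi> \<in> fsB_hom Es (fsB_gen p)"
  shows "\<phi> 0 = 0"
  using fsB_gen_hom_uminus[OF assms(2) fsB_objD(2)[OF assms(1)]] fsB_objD(5)[OF assms(1) fsB_objD(2)[OF assms(1)]]
  by simp

lemma fibB_simps: "fst (fibB \<phi> Es) = fib \<phi> (fst Es) 0" "snd (fibB \<phi> Es) = restrict (snd Es) (fib \<phi> (fst Es) 0)"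
  by (simp_all add: fibB_def)

lemma fibB_obj:
  assumes "fsB_obj Es" "\<phi> \<in> fsB_hom Es (fsB_gen p)"
  shows "fsB_obj (fibB \<phi> Es)"
proof -
  note o = fsB_objD[OF assms(1)]
  have "finite (fib \<phi> (fst Es) 0)" using o(1) by (simp add: fib_def)
  moreover have "0 \<in> fib \<phi> (fst Es) 0" using o(2) fsB_gen_hom_0[OF assms] by (simp add: mem_fib)
  moreover have "\<And>x. x \<in> fib \<phi> (fst Es) 0 \<Longrightarrow> snd Es x \<in> fib \<phi> (fst Es) 0"
    using o(3) fsB_gen_hom_uminus[OF assms(2)] by (auto simp: mem_fib)
  ultimately show ?thesis unfolding fsB_obj_def Let_def fibB_simps
    using o by (auto simp: PiE_iff extensional_def mem_fib)
qed

lemma fib_fsA_obj: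
  assumes "fsB_obj Es" "\<phi> \<in> fsB_hom Es (fsB_gen p)" "1 \<le> i" "i \<le> int p"
  shows "fsA_obj (fib \<phi> (fst Es) i)"
proof -
  obtain x where "x \<in> fst Es" "\<phi> x = i" using fsB_gen_hom_surj[OF assms(2), of i] assms(3,4) by auto
  then show ?thesis using fsB_objD(1)[OF assms(1)] by (auto simp: fsA_obj_def fib_def)
qed

lemma compose_cancel_surj:
  assumes "\<psi> ` A' = A" "f \<in> extensional A" "f2 \<in> extensional A" "compose A' f \<psi> = compose A' f2 \<psi>"
  shows "f = f2"
proof (rule ext)
  fix x show "f x = f2 x"
  proof (cases "x \<in> A")
    case True
    then obtain y where "y \<in> A'" "\<psi> y = x" using assms(1) by blast
    then show ?thesis using fun_cong[OF assms(4), of y] by (simp add: compose_def)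
  next
    case False
    then show ?thesis using assms(2,3) by (simp add: extensional_def)
  qed
qed

lemma fsB_hom_compose:
  assumes o: "fsB_obj X" and f: "f \<in> fsB_hom X Y" and g: "g \<in> fsB_hom Y Z"
  shows "compose (fst X) g f \<in> fsB_hom X Z"
proof (rule fsB_homI)
  fix x assume x: "x \<in> fst X"
  have fx: "f x \<in> fst Y" using fsB_homD(4)[OF f x] .
  show "compose (fst X) g f x \<in> fst Z" using x fsB_homD(4)[OF g fx] by (simp add: compose_def)
  have sx: "snd X x \<in> fst X" using fsB_objD(3)[OF o x] .
  have "f (snd X x) = snd Y (f x)" using fsB_homD(3)[OF f x] .
  moreover have "g (snd Y (f x)) = snd Z (g (f x))" using fsB_homD(3)[OF g fx] .
  ultimately show "compose (fst X) g f (snd X x) = snd Z (compose (fst X) g f x)"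
    using x sx by (simp add: compose_def)
next
  fix x assume "x \<notin> fst X" then show "compose (fst X) g f x = undefined" by (simp add: compose_def)
next
  fix z assume "z \<in> fst Z"
  then obtain y where y: "y \<in> fst Y" "g y = z" using fsB_homD(2)[OF g] by (metis imageE)
  then obtain x where x: "x \<in> fst X" "f x = y" using fsB_homD(2)[OF f] by (metis imageE)
  show "\<exists>x\<in>fst X. compose (fst X) g f x = z" using x y by (auto simp: compose_def)
qed

lemma image_fib_compose:
  assumes psi: "\<psi> \<in> fsB_hom E' E"
  shows "\<psi> ` fib (compose (fst E') \<phi> \<psi>) (fst E') i = fib \<phi> (fst E) i"
proof
  show "\<psi> ` fib (compose (fst E') \<phi> \<psi>) (fst E') i \<subseteq> fib \<phi> (fst E) i"
    using fsB_homD(4)[OF psi] by (auto simp: mem_fib compose_def)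
next
  show "fib \<phi> (fst E) i \<subseteq> \<psi> ` fib (compose (fst E') \<phi> \<psi>) (fst E') i"
  proof
    fix y assume "y \<in> fib \<phi> (fst E) i"
    then have y: "y \<in> fst E" "\<phi> y = i" by (auto simp: mem_fib)
    then obtain x where "x \<in> fst E'" "\<psi> x = y" using fsB_homD(2)[OF psi] by (metis imageE)
    then show "y \<in> \<psi> ` fib (compose (fst E') \<phi> \<psi>) (fst E') i" using y by (auto simp: mem_fib compose_def)
  qed
qed

lemma fsB_hom_restrict_fib:
  assumes o': "fsB_obj E'" and psi: "\<psi> \<in> fsB_hom E' E" and ph: "\<phi> \<in> fsB_hom E (fsB_gen p)"
  defines "\<chi> \<equiv> compose (fst E') \<phi> \<psi>"
  shows "restrict \<psi> (fib \<chi> (fst E') 0) \<in> fsB_hom (fibB \<chi> E') (fibB \<phi> E)"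
proof (rule fsB_homI)
  note im = image_fib_compose[OF psi, of \<phi> 0, folded \<chi>_def]
  fix x assume x: "x \<in> fst (fibB \<chi> E')"
  then have xf: "x \<in> fib \<chi> (fst E') 0" by (simp add: fibB_simps)
  show "restrict \<psi> (fib \<chi> (fst E') 0) x \<in> fst (fibB \<phi> E)" using xf im by (auto simp: fibB_simps)
  have xe: "x \<in> fst E'" using xf by (simp add: mem_fib)
  have px: "\<psi> x \<in> fib \<phi> (fst E) 0" using im xf by blast
  have eq: "\<psi> (snd E' x) = snd E (\<psi> x)" using fsB_homD(3)[OF psi xe] .
  have sx: "snd E' x \<in> fib \<chi> (fst E') 0"
  proof -
    have "snd E' x \<in> fst E'" using fsB_objD(3)[OF o' xe] .
    moreover have "\<phi> (snd E (\<psi> x)) = 0" using fsB_gen_hom_uminus[OF ph] px by (simp add: mem_fib)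
    ultimately show ?thesis using eq by (simp add: mem_fib \<chi>_def compose_def)
  qed
  show "restrict \<psi> (fib \<chi> (fst E') 0) (snd (fibB \<chi> E') x) = snd (fibB \<phi> E) (restrict \<psi> (fib \<chi> (fst E') 0) x)"
    using xf sx px eq by (simp add: fibB_simps)
next
  fix x assume "x \<notin> fst (fibB \<chi> E')" then show "restrict \<psi> (fib \<chi> (fst E') 0) x = undefined"
    by (simp add: fibB_simps)
next
  fix y assume "y \<in> fst (fibB \<phi> E)"
  then show "\<exists>x\<in>fst (fibB \<chi> E'). restrict \<psi> (fib \<chi> (fst E') 0) x = y"
    using image_fib_compose[OF psi, of \<phi> 0, folded \<chi>_def] unfolding fibB_simps by (metis imageE restrict_apply')
qed

lemma fsA_hom_restrict_fib:
  fixes \<phi> :: "int \<Rightarrow> int"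
  assumes psi: "\<psi> \<in> fsB_hom E' E"
  defines "\<chi> \<equiv> compose (fst E') \<phi> \<psi>"
  shows "restrict \<psi> (fib \<chi> (fst E') i) \<in> fsA_hom (fib \<chi> (fst E') i) (fib \<phi> (fst E) i)"
proof (rule fsA_homI)
  note im = image_fib_compose[OF psi, of \<phi> i, folded \<chi>_def]
  fix x assume "x \<in> fib \<chi> (fst E') i"
  then show "restrict \<psi> (fib \<chi> (fst E') i) x \<in> fib \<phi> (fst E) i" using im by auto
next
  fix x assume "x \<notin> fib \<chi> (fst E') i" then show "restrict \<psi> (fib \<chi> (fst E') i) x = undefined" by simp
next
  fix y assume "y \<in> fib \<phi> (fst E) i"
  then show "\<exists>x\<in>fib \<chi> (fst E') i. restrict \<psi> (fib \<chi> (fst E') i) x = y"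
    using image_fib_compose[OF psi, of \<phi> i, folded \<chi>_def] by (metis imageE restrict_apply')
qed

lemma compose_restrict: "compose A f (restrict \<psi> A) = compose A f \<psi>"
  by (rule ext) (simp add: compose_def)

lemma fsB_restrict_fib_cancel:
  assumes psi: "\<psi> \<in> fsB_hom E' E"
    and f1: "f1 \<in> fsB_hom (fibB \<phi> E) Z" and f2: "f2 \<in> fsB_hom (fibB \<phi> E) Z"
    and eq: "fsB_comp (fibB (compose (fst E') \<phi> \<psi>) E') f1 (restrict \<psi> (fib (compose (fst E') \<phi> \<psi>) (fst E') 0))
           = fsB_comp (fibB (compose (fst E') \<phi> \<psi>) E') f2 (restrict \<psi> (fib (compose (fst E') \<phi> \<psi>) (fst E') 0))"
  shows "f1 = f2"
proof (rule compose_cancel_surj[OF image_fib_compose[OF psi, of \<phi> 0]])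
  show "f1 \<in> extensional (fib \<phi> (fst E) 0)" using fsB_hom_extensional[OF f1] by (simp add: fibB_simps)
  show "f2 \<in> extensional (fib \<phi> (fst E) 0)" using fsB_hom_extensional[OF f2] by (simp add: fibB_simps)
  show "compose (fib (compose (fst E') \<phi> \<psi>) (fst E') 0) f1 \<psi> = compose (fib (compose (fst E') \<phi> \<psi>) (fst E') 0) f2 \<psi>"
    using eq by (simp add: fsB_comp_def fibB_simps compose_restrict)
qed

lemma fsA_restrict_fib_cancel:
  assumes psi: "\<psi> \<in> fsB_hom E' E"
    and f1: "f1 \<in> fsA_hom (fib \<phi> (fst E) i) Z" and f2: "f2 \<in> fsA_hom (fib \<phi> (fst E) i) Z"
    and eq: "fsA_comp (fib (compose (fst E') \<phi> \<psi>) (fst E') i) f1 (restrict \<psi> (fib (compose (fst E') \<phi> \<psi>) (fst E') i))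
           = fsA_comp (fib (compose (fst E') \<phi> \<psi>) (fst E') i) f2 (restrict \<psi> (fib (compose (fst E') \<phi> \<psi>) (fst E') i))"
  shows "f1 = f2"
proof (rule compose_cancel_surj[OF image_fib_compose[OF psi, of \<phi> i]])
  show "f1 \<in> extensional (fib \<phi> (fst E) i)" using fsA_hom_extensional[OF f1] .
  show "f2 \<in> extensional (fib \<phi> (fst E) i)" using fsA_hom_extensional[OF f2] .
  show "compose (fib (compose (fst E') \<phi> \<psi>) (fst E') i) f1 \<psi> = compose (fib (compose (fst E') \<phi> \<psi>) (fst E') i) f2 \<psi>"
    using eq by (simp add: fsA_comp_def compose_restrict)
qed

section \<open>Submodules, epimorphisms and free modules\<close>

lemma free_obD: "v \<in> free_ob hom gs Y \<Longrightarrow> v (i, f) \<noteq> 0 \<Longrightarrow> i < length gs \<and> f \<in> hom Y (gs ! i)"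
  by (simp add: free_ob_def)

lemma submoduleD: "is_submodule obj hom Mob Mmor S \<Longrightarrow> obj X \<Longrightarrow> fn_subspace (S X) \<and> S X \<subseteq> Mob X"
  "is_submodule obj hom Mob Mmor S \<Longrightarrow> obj X \<Longrightarrow> obj Y \<Longrightarrow> f \<in> hom X Y \<Longrightarrow> v \<in> S Y \<Longrightarrow> Mmor X Y f v \<in> S X"
  unfolding is_submodule_def by blast+

lemma epiD: "is_epi obj hom Sob Smor Mob Mmor \<eta> \<Longrightarrow> obj X \<Longrightarrow> fn_linear_on (Sob X) (Mob X) (\<eta> X) \<and> \<eta> X ` Sob X = Mob X"
  "is_epi obj hom Sob Smor Mob Mmor \<eta> \<Longrightarrow> obj X \<Longrightarrow> obj Y \<Longrightarrow> f \<in> hom X Y \<Longrightarrow> v \<in> Sob Y \<Longrightarrow> \<eta> X (Smor X Y f v) = Mmor X Y f (\<eta> Y v)"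
  by (auto simp: is_epi_def)

lemma free_mor_unique_preimage:
  assumes j: "j < length gs" and f: "f \<in> hom Y (gs ! j)"
    and uniq: "\<And>f2. f2 \<in> hom Y (gs ! j) \<Longrightarrow> cmp Y' f2 h = cmp Y' f h \<Longrightarrow> f2 = f"
  shows "free_mor hom cmp gs Y' Y h v (j, cmp Y' f h) = v (j, f)"
proof -
  have "{f2 \<in> hom Y (gs ! j). cmp Y' f2 h = cmp Y' f h} = {f}" using f uniq by auto
  then show ?thesis using j by (simp add: free_mor_def)
qed

lemma free_mor_nonzero:
  assumes "free_mor hom cmp gs Y' Y h v (j, f') \<noteq> 0"
  shows "j < length gs \<and> (\<exists>f. f \<in> hom Y (gs ! j) \<and> cmp Y' f h = f')"
proof -
  have "j < length gs" using assms by (auto simp: free_mor_def split: if_splits)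
  moreover have "{f2 \<in> hom Y (gs ! j). cmp Y' f2 h = f'} \<noteq> {}"
  proof
    assume e: "{f2 \<in> hom Y (gs ! j). cmp Y' f2 h = f'} = {}"
    have "free_mor hom cmp gs Y' Y h v (j, f') = 0" unfolding free_mor_def prod.case e by simp
    then show False using assms by simp
  qed
  ultimately show ?thesis by blast
qed

lemma free_mor_no_preimage:
  assumes "\<not> (\<exists>f. f \<in> hom Y (gs ! j) \<and> cmp Y' f h = f')"
  shows "free_mor hom cmp gs Y' Y h v (j, f') = 0"
  using free_mor_nonzero[of hom cmp gs Y' Y h v j f'] assms by blast

lemma fsB_comp_restrict_fib: "fsB_comp (fibB \<chi> E') f (restrict \<psi> (fib \<chi> (fst E') 0)) = compose (fib \<chi> (fst E') 0) f \<psi>"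
  by (simp add: fsB_comp_def fibB_simps compose_restrict)
lemma fsA_comp_restrict: "fsA_comp X f (restrict \<psi> X) = compose X f \<psi>"
  by (simp add: fsA_comp_def compose_restrict)

lemma sum_sum_list_swap: "(\<Sum>g\<in>G. \<Sum>x\<leftarrow>L. f x g) = (\<Sum>x\<leftarrow>L. \<Sum>g\<in>G. f x g)"
  by (induct L) (simp_all add: sum.distrib)

lemma free_mor_sum_list: "free_mor hom cmp gs Y' Y h (\<lambda>z. \<Sum>x\<leftarrow>L. f x z) = (\<lambda>z. \<Sum>x\<leftarrow>L. free_mor hom cmp gs Y' Y h (f x) z)"
proof (rule ext)
  fix z
  show "free_mor hom cmp gs Y' Y h (\<lambda>z. \<Sum>x\<leftarrow>L. f x z) z = (\<Sum>x\<leftarrow>L. free_mor hom cmp gs Y' Y h (f x) z)"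
    by (cases z) (simp add: free_mor_def sum_sum_list_swap)
qed

lemma free_mor_restrict_fibB:
  assumes psi: "\<psi> \<in> fsB_hom E' E" and j: "j < length gs" and f: "f \<in> fsB_hom (fibB \<phi> E) (gs ! j)"
  defines "\<chi> \<equiv> compose (fst E') \<phi> \<psi>"
  shows "free_mor fsB_hom fsB_comp gs (fibB \<chi> E') (fibB \<phi> E) (restrict \<psi> (fib \<chi> (fst E') 0)) s
      (j, compose (fib \<chi> (fst E') 0) f \<psi>) = s (j, f)"
proof -
  have "free_mor fsB_hom fsB_comp gs (fibB \<chi> E') (fibB \<phi> E) (restrict \<psi> (fib \<chi> (fst E') 0)) s
      (j, fsB_comp (fibB \<chi> E') f (restrict \<psi> (fib \<chi> (fst E') 0))) = s (j, f)"
    by (rule free_mor_unique_preimage[where hom = fsB_hom, OF j f]) (use fsB_restrict_fib_cancel[OF psi _ f] in \<open>unfold \<chi>_def, blast\<close>)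
  then show ?thesis by (simp add: fsB_comp_restrict_fib)
qed

lemma free_mor_restrict_fib:
  assumes psi: "\<psi> \<in> fsB_hom E' E" and j: "j < length gs" and f: "f \<in> fsA_hom (fib \<phi> (fst E) i) (gs ! j)"
  defines "\<chi> \<equiv> compose (fst E') \<phi> \<psi>"
  shows "free_mor fsA_hom fsA_comp gs (fib \<chi> (fst E') i) (fib \<phi> (fst E) i) (restrict \<psi> (fib \<chi> (fst E') i)) s
      (j, compose (fib \<chi> (fst E') i) f \<psi>) = s (j, f)"
proof -
  have "free_mor fsA_hom fsA_comp gs (fib \<chi> (fst E') i) (fib \<phi> (fst E) i) (restrict \<psi> (fib \<chi> (fst E') i)) s
      (j, fsA_comp (fib \<chi> (fst E') i) f (restrict \<psi> (fib \<chi> (fst E') i))) = s (j, f)"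
    by (rule free_mor_unique_preimage[where hom = fsA_hom, OF j f]) (use fsA_restrict_fib_cancel[OF psi _ f] in \<open>unfold \<chi>_def, blast\<close>)
  then show ?thesis by (simp add: fsA_comp_restrict)
qed

lemma free_mor_restrict_fibB_nonzero:
  assumes "free_mor fsB_hom fsB_comp gs (fibB \<chi> E') (fibB \<phi> E) (restrict \<psi> (fib \<chi> (fst E') 0)) s (j, f') \<noteq> 0"
  shows "j < length gs \<and> (\<exists>f. f \<in> fsB_hom (fibB \<phi> E) (gs ! j) \<and> compose (fib \<chi> (fst E') 0) f \<psi> = f')"
  using free_mor_nonzero[OF assms] by (simp add: fsB_comp_restrict_fib)

lemma free_mor_restrict_fib_nonzero:
  assumes "free_mor fsA_hom fsA_comp gs (fib \<chi> (fst E') i) X (restrict \<psi> (fib \<chi> (fst E') i)) s (j, f') \<noteq> 0"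
  shows "j < length gs \<and> (\<exists>f. f \<in> fsA_hom X (gs ! j) \<and> compose (fib \<chi> (fst E') i) f \<psi> = f')"
  using free_mor_nonzero[OF assms] by (simp add: fsA_comp_restrict)

section \<open>Morphisms to [-n, n] as glued families of morphisms\<close>

text \<open>\<open>glue A Es \<phi> f0 fs\<close> is the morphism to \<open>[-n, n]\<close> corresponding to \<open>\<phi>\<close>, \<open>f0\<close> and the surjections
  \<open>fs ! (i - 1) : \<phi>\<^sup>-\<^sup>1(i) \<rightarrow> [A i]\<close>; its values where \<open>\<phi> < 0\<close> are forced by equivariance.\<close>

definition glue :: "(nat \<Rightarrow> nat) \<Rightarrow> fsB_ob \<Rightarrow> (int \<Rightarrow> int) \<Rightarrow> (int \<Rightarrow> int) \<Rightarrow> (int \<Rightarrow> int) list \<Rightarrow> (int \<Rightarrow> int)" where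
  "glue A Es \<phi> f0 fs = restrict (\<lambda>x. if \<phi> x = 0 then f0 x
      else if \<phi> x > 0 then int (block_start A (nat (\<phi> x))) + (fs ! (nat (\<phi> x) - 1)) x
      else - (int (block_start A (nat (- \<phi> x))) + (fs ! (nat (- \<phi> x) - 1)) (snd Es x))) (fst Es)"

definition glue_data :: "(nat \<Rightarrow> nat) \<Rightarrow> nat \<Rightarrow> fsB_ob \<Rightarrow> (int \<Rightarrow> int) \<Rightarrow> (int \<Rightarrow> int) \<Rightarrow> (int \<Rightarrow> int) list \<Rightarrow> bool" where
  "glue_data A p Es \<phi> f0 fs \<longleftrightarrow> \<phi> \<in> fsB_hom Es (fsB_gen p) \<and> f0 \<in> fsB_hom (fibB \<phi> Es) (fsB_gen (A 0)) \<and>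
     length fs = p \<and> (\<forall>i<p. fs ! i \<in> fsA_hom (fib \<phi> (fst Es) (int i + 1)) (fsA_gen (A (Suc i))))"

lemma glue_pos:
  assumes v: "glue_data A p Es \<phi> f0 fs" and x: "x \<in> fst Es" and m: "\<phi> x = int m" "m \<ge> 1"
  shows "m \<le> p" "glue A Es \<phi> f0 fs x = int (block_start A m) + (fs ! (m - 1)) x"
    "int (block_start A m) < glue A Es \<phi> f0 fs x" "glue A Es \<phi> f0 fs x \<le> int (block_start A (Suc m))"
proof -
  have ph: "\<phi> \<in> fsB_hom Es (fsB_gen p)" using v by (simp add: glue_data_def)
  show mp: "m \<le> p" using fsB_gen_hom_abs_le[OF ph x] m by simp
  show e: "glue A Es \<phi> f0 fs x = int (block_start A m) + (fs ! (m - 1)) x"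
    using x m by (simp add: glue_def)
  have "x \<in> fib \<phi> (fst Es) (int (m - 1) + 1)" using x m by (simp add: mem_fib)
  moreover have "fs ! (m - 1) \<in> fsA_hom (fib \<phi> (fst Es) (int (m - 1) + 1)) (fsA_gen (A (Suc (m - 1))))"
  proof -
    have all: "\<forall>i<p. fs ! i \<in> fsA_hom (fib \<phi> (fst Es) (int i + 1)) (fsA_gen (A (Suc i)))"
      using v by (simp add: glue_data_def)
    have "m - 1 < p" using mp m(2) by simp
    then show ?thesis using all by blast
  qed
  ultimately have "(fs ! (m - 1)) x \<in> fsA_gen (A (Suc (m - 1)))" by (rule fsA_homD(3)[rotated])
  then have "1 \<le> (fs ! (m - 1)) x" "(fs ! (m - 1)) x \<le> int (A m)" using m(2) by (auto simp: fsA_gen_def)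
  then show "int (block_start A m) < glue A Es \<phi> f0 fs x" "glue A Es \<phi> f0 fs x \<le> int (block_start A (Suc m))"
    unfolding e block_start_Suc by auto
qed

lemma glue_centre:
  assumes v: "glue_data A p Es \<phi> f0 fs" and x: "x \<in> fst Es" and m: "\<phi> x = 0"
  shows "glue A Es \<phi> f0 fs x = f0 x" "\<bar>glue A Es \<phi> f0 fs x\<bar> \<le> int (block_start A 1)"
proof -
  show e: "glue A Es \<phi> f0 fs x = f0 x" using x m by (simp add: glue_def)
  have "x \<in> fst (fibB \<phi> Es)" using x m by (simp add: fibB_simps mem_fib)
  moreover have f0h: "f0 \<in> fsB_hom (fibB \<phi> Es) (fsB_gen (A 0))" using v by (simp add: glue_data_def)
  ultimately have "f0 x \<in> fst (fsB_gen (A 0))" using fsB_homD(4) by blast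
  then show "\<bar>glue A Es \<phi> f0 fs x\<bar> \<le> int (block_start A 1)" unfolding e block_start_1 by (auto simp: fsB_gen_simps)
qed

lemma glue_involution:
  assumes o: "fsB_obj Es" and v: "glue_data A p Es \<phi> f0 fs" and x: "x \<in> fst Es"
  shows "glue A Es \<phi> f0 fs (snd Es x) = - glue A Es \<phi> f0 fs x"
proof -
  have ph: "\<phi> \<in> fsB_hom Es (fsB_gen p)" using v by (simp add: glue_data_def)
  note oo = fsB_objD[OF o]
  have sx: "snd Es x \<in> fst Es" using oo(3) x .
  have n: "\<phi> (snd Es x) = - \<phi> x" using fsB_gen_hom_uminus[OF ph x] .
  consider "\<phi> x = 0" | "\<phi> x > 0" | "\<phi> x < 0" by linarith
  then show ?thesis
  proof cases
    case 1
    have xf: "x \<in> fst (fibB \<phi> Es)" using x 1 by (simp add: fibB_simps mem_fib)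
    have f0h: "f0 \<in> fsB_hom (fibB \<phi> Es) (fsB_gen (A 0))" using v by (simp add: glue_data_def)
    have "f0 (snd (fibB \<phi> Es) x) = snd (fsB_gen (A 0)) (f0 x)" using fsB_homD(3)[OF f0h xf] .
    moreover have "f0 x \<in> fst (fsB_gen (A 0))" using fsB_homD(4)[OF f0h xf] .
    ultimately have "f0 (snd Es x) = - f0 x" using xf
      by (simp add: fibB_simps fsB_gen_simps)
    then show ?thesis using 1 n x sx by (simp add: glue_def)
  next
    case 2
    then show ?thesis using n x sx oo(4)[OF x] by (simp add: glue_def)
  next
    case 3
    then show ?thesis using n x sx oo(4)[OF x] by (simp add: glue_def)
  qed
qed

lemma abs_glue_le:
  assumes o: "fsB_obj Es" and v: "glue_data A p Es \<phi> f0 fs" and x: "x \<in> fst Es"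
  shows "\<bar>glue A Es \<phi> f0 fs x\<bar> \<le> int (block_start A (Suc p))"
proof -
  have ph: "\<phi> \<in> fsB_hom Es (fsB_gen p)" using v by (simp add: glue_data_def)
  have pos: "\<bar>glue A Es \<phi> f0 fs y\<bar> \<le> int (block_start A (Suc p))" if y: "y \<in> fst Es" "\<phi> y \<ge> 0" for y
  proof (cases "\<phi> y = 0")
    case True
    then show ?thesis using glue_centre(2)[OF v y(1) True] block_start_mono[of 1 "Suc p" A] by simp
  next
    case False
    then obtain m where m: "\<phi> y = int m" "m \<ge> 1" using y(2)
      by (metis nonneg_int_cases of_nat_0 less_one not_le)
    note e = glue_pos[OF v y(1) m]
    then show ?thesis using block_start_mono[of "Suc m" "Suc p" A] by simp
  qed
  show ?thesis
  proof (cases "\<phi> x \<ge> 0")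
    case True then show ?thesis using pos x by simp
  next
    case False
    have sx: "snd Es x \<in> fst Es" using fsB_objD(3)[OF o x] .
    have "\<phi> (snd Es x) \<ge> 0" using fsB_gen_hom_uminus[OF ph x] False by simp
    then have "\<bar>glue A Es \<phi> f0 fs (snd Es x)\<bar> \<le> int (block_start A (Suc p))" using pos sx by simp
    then show ?thesis using glue_involution[OF o v x] by simp
  qed
qed

lemma glue_surj_pos:
  assumes v: "glue_data A p Es \<phi> f0 fs" and m: "1 \<le> m" "m \<le> p" "int (block_start A m) < y" "y \<le> int (block_start A (Suc m))"
  shows "\<exists>x\<in>fst Es. glue A Es \<phi> f0 fs x = y"
proof -
  have all: "\<forall>i<p. fs ! i \<in> fsA_hom (fib \<phi> (fst Es) (int i + 1)) (fsA_gen (A (Suc i)))"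
    using v by (simp add: glue_data_def)
  have "m - 1 < p" using m by simp
  then have fh: "fs ! (m - 1) \<in> fsA_hom (fib \<phi> (fst Es) (int (m - 1) + 1)) (fsA_gen (A (Suc (m - 1))))"
    using all by blast
  have "y - int (block_start A m) \<in> fsA_gen (A (Suc (m - 1)))" using m by (auto simp: fsA_gen_def block_start_Suc)
  then obtain x where x: "x \<in> fib \<phi> (fst Es) (int (m - 1) + 1)" "(fs ! (m - 1)) x = y - int (block_start A m)"
    using fsA_homD(2)[OF fh] by (metis imageE)
  have xe: "x \<in> fst Es" and px: "\<phi> x = int m" using x(1) m(1) by (auto simp: mem_fib)
  have "glue A Es \<phi> f0 fs x = y" using glue_pos(2)[OF v xe px m(1)] x(2) by simp
  then show ?thesis using xe by blast
qed

lemma glue_surj: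
  assumes o: "fsB_obj Es" and v: "glue_data A p Es \<phi> f0 fs" and y: "\<bar>y\<bar> \<le> int (block_start A (Suc p))"
  shows "\<exists>x\<in>fst Es. glue A Es \<phi> f0 fs x = y"
proof (cases "\<bar>y\<bar> \<le> int (block_start A 1)")
  case True
  have f0: "f0 \<in> fsB_hom (fibB \<phi> Es) (fsB_gen (A 0))" using v by (simp add: glue_data_def)
  have "y \<in> fst (fsB_gen (A 0))" using True block_start_1[of A] by (auto simp: fsB_gen_simps)
  then obtain x where x: "x \<in> fib \<phi> (fst Es) 0" "f0 x = y"
    using fsB_homD(2)[OF f0] by (metis fibB_simps(1) imageE)
  then have "x \<in> fst Es" "\<phi> x = 0" by (auto simp: mem_fib)
  then show ?thesis using glue_centre(1)[OF v] x(2) by metis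
next
  case False
  then obtain m where m: "1 \<le> m" "m \<le> p" "int (block_start A m) < \<bar>y\<bar>" "\<bar>y\<bar> \<le> int (block_start A (Suc m))"
    using block_cover[OF y] by blast
  show ?thesis
  proof (cases "y > 0")
    case True
    then show ?thesis using glue_surj_pos[OF v m(1,2)] m(3,4) by simp
  next
    case False
    then obtain x where x: "x \<in> fst Es" "glue A Es \<phi> f0 fs x = - y"
      using glue_surj_pos[OF v m(1,2), of "- y"] m(3,4) by auto
    then have "glue A Es \<phi> f0 fs (snd Es x) = y" using glue_involution[OF o v x(1)] by simp
    then show ?thesis using fsB_objD(3)[OF o x(1)] by blast
  qed
qed

lemma glue_fsB_hom:
  assumes o: "fsB_obj Es" and v: "glue_data A p Es \<phi> f0 fs"
  shows "glue A Es \<phi> f0 fs \<in> fsB_hom Es (fsB_gen (block_start A (Suc p)))"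
proof (rule fsB_homI)
  fix x assume x: "x \<in> fst Es"
  have "glue A Es \<phi> f0 fs x \<in> {- int (block_start A (Suc p))..int (block_start A (Suc p))}"
    using abs_glue_le[OF o v x] by auto
  then show "glue A Es \<phi> f0 fs x \<in> fst (fsB_gen (block_start A (Suc p)))"
    and "glue A Es \<phi> f0 fs (snd Es x) = snd (fsB_gen (block_start A (Suc p))) (glue A Es \<phi> f0 fs x)"
    using glue_involution[OF o v x] by (simp_all add: fsB_gen_simps)
next
  fix x assume "x \<notin> fst Es" then show "glue A Es \<phi> f0 fs x = undefined" by (simp add: glue_def)
next
  fix y assume "y \<in> fst (fsB_gen (block_start A (Suc p)))"
  then show "\<exists>x\<in>fst Es. glue A Es \<phi> f0 fs x = y" using glue_surj[OF o v] by (auto simp: fsB_gen_simps)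
qed

definition split_base :: "(nat \<Rightarrow> nat) \<Rightarrow> nat \<Rightarrow> fsB_ob \<Rightarrow> (int \<Rightarrow> int) \<Rightarrow> (int \<Rightarrow> int)" where
  "split_base A p Es g = restrict (\<lambda>x. block_index A p (g x)) (fst Es)"
definition split_centre :: "(nat \<Rightarrow> nat) \<Rightarrow> nat \<Rightarrow> fsB_ob \<Rightarrow> (int \<Rightarrow> int) \<Rightarrow> (int \<Rightarrow> int)" where
  "split_centre A p Es g = restrict g (fib (split_base A p Es g) (fst Es) 0)"
definition split_blocks :: "(nat \<Rightarrow> nat) \<Rightarrow> nat \<Rightarrow> fsB_ob \<Rightarrow> (int \<Rightarrow> int) \<Rightarrow> (int \<Rightarrow> int) list" where
  "split_blocks A p Es g = map (\<lambda>i. restrict (\<lambda>x. g x - int (block_start A (Suc i))) (fib (split_base A p Es g) (fst Es) (int i + 1))) [0..<p]"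

lemma block_index_glue:
  assumes o: "fsB_obj Es" and v: "glue_data A p Es \<phi> f0 fs" and x: "x \<in> fst Es"
  shows "block_index A p (glue A Es \<phi> f0 fs x) = \<phi> x"
proof -
  have ph: "\<phi> \<in> fsB_hom Es (fsB_gen p)" using v by (simp add: glue_data_def)
  have pos: "block_index A p (glue A Es \<phi> f0 fs y) = \<phi> y" if y: "y \<in> fst Es" "\<phi> y \<ge> 0" for y
  proof (cases "\<phi> y = 0")
    case True
    then show ?thesis using glue_centre(2)[OF v y(1) True] block_index_eq_0 by simp
  next
    case False
    then obtain m where m: "\<phi> y = int m" "m \<ge> 1" using y(2)
      by (metis nonneg_int_cases of_nat_0 less_one not_le)
    note e = glue_pos[OF v y(1) m]
    have "glue A Es \<phi> f0 fs y > 0" using e(3) by linarith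
    then show ?thesis using block_index_eq[OF m(2) e(1), where w = "glue A Es \<phi> f0 fs y"] e(3,4) m(1) by simp
  qed
  show ?thesis
  proof (cases "\<phi> x \<ge> 0")
    case True then show ?thesis using pos x by simp
  next
    case False
    have sx: "snd Es x \<in> fst Es" using fsB_objD(3)[OF o x] .
    have n: "\<phi> (snd Es x) = - \<phi> x" using fsB_gen_hom_uminus[OF ph x] .
    then have "block_index A p (glue A Es \<phi> f0 fs (snd Es x)) = - \<phi> x" using pos sx False by simp
    then show ?thesis using glue_involution[OF o v x] block_index_uminus by (metis minus_minus)
  qed
qed

lemma split_base_glue:
  assumes o: "fsB_obj Es" and v: "glue_data A p Es \<phi> f0 fs"
  shows "split_base A p Es (glue A Es \<phi> f0 fs) = \<phi>"
proof (rule ext)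
  have ph: "\<phi> \<in> fsB_hom Es (fsB_gen p)" using v by (simp add: glue_data_def)
  fix x show "split_base A p Es (glue A Es \<phi> f0 fs) x = \<phi> x"
    using block_index_glue[OF o v] fsB_homD(5)[OF ph] by (cases "x \<in> fst Es") (auto simp: split_base_def)
qed

lemma split_centre_glue:
  assumes o: "fsB_obj Es" and v: "glue_data A p Es \<phi> f0 fs"
  shows "split_centre A p Es (glue A Es \<phi> f0 fs) = f0"
proof (rule ext)
  have f0: "f0 \<in> fsB_hom (fibB \<phi> Es) (fsB_gen (A 0))" using v by (simp add: glue_data_def)
  fix x show "split_centre A p Es (glue A Es \<phi> f0 fs) x = f0 x"
    using glue_centre(1)[OF v] fsB_homD(5)[OF f0]
    by (cases "x \<in> fib \<phi> (fst Es) 0") (auto simp: split_centre_def split_base_glue[OF o v] mem_fib fibB_simps)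
qed

lemma split_blocks_glue:
  assumes o: "fsB_obj Es" and v: "glue_data A p Es \<phi> f0 fs"
  shows "split_blocks A p Es (glue A Es \<phi> f0 fs) = fs"
proof (rule nth_equalityI)
  show "length (split_blocks A p Es (glue A Es \<phi> f0 fs)) = length fs"
    using v by (simp add: split_blocks_def glue_data_def)
next
  fix i assume "i < length (split_blocks A p Es (glue A Es \<phi> f0 fs))"
  then have i: "i < p" by (simp add: split_blocks_def)
  have fs: "fs ! i \<in> fsA_hom (fib \<phi> (fst Es) (int i + 1)) (fsA_gen (A (Suc i)))"
    using v i by (simp add: glue_data_def)
  show "split_blocks A p Es (glue A Es \<phi> f0 fs) ! i = fs ! i"
  proof (rule ext)
    fix x
    show "(split_blocks A p Es (glue A Es \<phi> f0 fs) ! i) x = (fs ! i) x"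
    proof (cases "x \<in> fib \<phi> (fst Es) (int i + 1)")
      case True
      then have "x \<in> fst Es" "\<phi> x = int (Suc i)" by (auto simp: mem_fib)
      from glue_pos(2)[OF v this] show ?thesis
        using True i unfolding split_blocks_def split_base_glue[OF o v] by simp
    next
      case False
      then show ?thesis
        using fsA_homD(4)[OF fs] i unfolding split_blocks_def split_base_glue[OF o v] by simp
    qed
  qed
qed

lemmas split_glue = split_base_glue split_centre_glue split_blocks_glue

lemma split_base_apply: "x \<in> fst Es \<Longrightarrow> split_base A p Es g x = block_index A p (g x)"
  by (simp add: split_base_def)

lemma split_base_involution:
  assumes o: "fsB_obj Es" and g: "g \<in> fsB_hom Es (fsB_gen n)" and x: "x \<in> fst Es"
  shows "split_base A p Es g (snd Es x) = - split_base A p Es g x"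
  using fsB_gen_hom_uminus[OF g x] fsB_objD(3)[OF o x] x by (simp add: split_base_apply block_index_uminus)

lemma split_base_fsB_hom:
  assumes o: "fsB_obj Es" and g: "g \<in> fsB_hom Es (fsB_gen (block_start A (Suc p)))"
    and Apos: "\<forall>m. 1 \<le> m \<and> m \<le> p \<longrightarrow> A m \<ge> 1"
  shows "split_base A p Es g \<in> fsB_hom Es (fsB_gen p)"
proof (rule fsB_homI)
  fix x assume x: "x \<in> fst Es"
  have "\<bar>split_base A p Es g x\<bar> \<le> int p" using abs_block_index_le x by (simp add: split_base_apply)
  then have "split_base A p Es g x \<in> {- int p..int p}" by auto
  then show "split_base A p Es g x \<in> fst (fsB_gen p)"
    and "split_base A p Es g (snd Es x) = snd (fsB_gen p) (split_base A p Es g x)"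
    using split_base_involution[OF o g x] by (simp_all add: fsB_gen_simps)
next
  fix x assume "x \<notin> fst Es" then show "split_base A p Es g x = undefined" by (simp add: split_base_def)
next
  fix v assume "v \<in> fst (fsB_gen p)"
  then have v: "\<bar>v\<bar> \<le> int p" by (auto simp: fsB_gen_simps)
  show "\<exists>x\<in>fst Es. split_base A p Es g x = v"
  proof (cases "v = 0")
    case True
    obtain x where "x \<in> fst Es" "g x = 0" using fsB_gen_hom_surj[OF g, of 0] by auto
    then show ?thesis using True block_index_eq_0[of 0 A p] by (metis split_base_apply abs_zero of_nat_0_le_iff)
  next
    case False
    define m where "m = nat \<bar>v\<bar>"
    have m: "1 \<le> m" "m \<le> p" "v = sgn v * int m" using v False by (auto simp: m_def abs_sgn_eq sgn_if)
    \<comment> \<open>the first point of the \<open>m\<close>-th block, with the sign of \<open>v\<close>, lies in the piece numbered \<open>v\<close>\<close>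
    define w where "w = sgn v * (int (block_start A m) + 1)"
    have "A m \<ge> 1" using Apos m by blast
    then have w: "\<bar>w\<bar> = int (block_start A m) + 1" "\<bar>w\<bar> \<le> int (block_start A (Suc m))"
      using False by (auto simp: w_def abs_mult block_start_Suc)
    then have "\<bar>w\<bar> \<le> int (block_start A (Suc p))" using block_start_mono[of "Suc m" "Suc p" A] m by linarith
    then obtain x where x: "x \<in> fst Es" "g x = w" using fsB_gen_hom_surj[OF g] by blast
    have "block_index A p w = v"
      using block_index_eq[OF m(1,2), where w = w] w m(3) False by (simp add: w_def sgn_mult)
    then show ?thesis using x by (auto simp: split_base_apply)
  qed
qed

lemma split_centre_fsB_hom:
  assumes o: "fsB_obj Es" and g: "g \<in> fsB_hom Es (fsB_gen (block_start A (Suc p)))"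
  defines "\<phi> \<equiv> split_base A p Es g"
  shows "split_centre A p Es g \<in> fsB_hom (fibB \<phi> Es) (fsB_gen (A 0))"
proof (rule fsB_homI)
  fix x assume "x \<in> fst (fibB \<phi> Es)"
  then have x: "x \<in> fst Es" "\<phi> x = 0" by (auto simp: fibB_simps mem_fib)
  then have gx: "\<bar>g x\<bar> \<le> int (A 0)"
    using block_index_eq_0_iff[OF fsB_gen_hom_abs_le[OF g x(1)]] by (simp add: \<phi>_def split_base_apply block_start_def)
  have sx: "snd Es x \<in> fst Es" "\<phi> (snd Es x) = 0"
    using fsB_objD(3)[OF o x(1)] split_base_involution[OF o g x(1)] x(2) by (auto simp: \<phi>_def)
  show "split_centre A p Es g x \<in> fst (fsB_gen (A 0))"
    using x gx by (auto simp: split_centre_def \<phi>_def[symmetric] mem_fib fsB_gen_simps)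
  have "g x \<in> {- int (A 0)..int (A 0)}" using gx by auto
  then show "split_centre A p Es g (snd (fibB \<phi> Es) x) = snd (fsB_gen (A 0)) (split_centre A p Es g x)"
    using x sx fsB_gen_hom_uminus[OF g x(1)]
    by (simp add: split_centre_def \<phi>_def[symmetric] fibB_simps mem_fib fsB_gen_simps)
next
  fix x assume "x \<notin> fst (fibB \<phi> Es)"
  then show "split_centre A p Es g x = undefined" by (simp add: split_centre_def \<phi>_def fibB_simps)
next
  fix y assume "y \<in> fst (fsB_gen (A 0))"
  then have y: "\<bar>y\<bar> \<le> int (block_start A 1)" by (auto simp: fsB_gen_simps block_start_def)
  then have "\<bar>y\<bar> \<le> int (block_start A (Suc p))" using block_start_mono[of 1 "Suc p" A] by simp
  then obtain x where x: "x \<in> fst Es" "g x = y" using fsB_gen_hom_surj[OF g] by blast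
  then have "\<phi> x = 0" using block_index_eq_0[OF y] by (simp add: \<phi>_def split_base_apply)
  then show "\<exists>x\<in>fst (fibB \<phi> Es). split_centre A p Es g x = y"
    using x by (auto simp: fibB_simps mem_fib split_centre_def \<phi>_def[symmetric])
qed

lemma split_blocks_fsA_hom:
  assumes g: "g \<in> fsB_hom Es (fsB_gen (block_start A (Suc p)))" and i: "i < p"
  defines "\<phi> \<equiv> split_base A p Es g"
  shows "split_blocks A p Es g ! i \<in> fsA_hom (fib \<phi> (fst Es) (int i + 1)) (fsA_gen (A (Suc i)))"
proof (rule fsA_homI)
  have e: "split_blocks A p Es g ! i = restrict (\<lambda>x. g x - int (block_start A (Suc i))) (fib \<phi> (fst Es) (int i + 1))"
    using i by (simp add: split_blocks_def \<phi>_def)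
  fix x assume xf: "x \<in> fib \<phi> (fst Es) (int i + 1)"
  then have x: "x \<in> fst Es" "block_index A p (g x) = int (Suc i)" by (auto simp: mem_fib \<phi>_def split_base_apply)
  then have "int (block_start A (Suc i)) < g x \<and> g x \<le> int (block_start A (Suc (Suc i)))"
    using block_index_eq_pos_iff[OF fsB_gen_hom_abs_le[OF g x(1)], of "Suc i"] i by simp
  then show "(split_blocks A p Es g ! i) x \<in> fsA_gen (A (Suc i))"
    using xf unfolding e by (auto simp: fsA_gen_def block_start_Suc)
next
  fix x assume "x \<notin> fib \<phi> (fst Es) (int i + 1)"
  then show "(split_blocks A p Es g ! i) x = undefined" using i by (simp add: split_blocks_def \<phi>_def)
next
  fix y assume "y \<in> fsA_gen (A (Suc i))"
  then have y: "1 \<le> y" "y \<le> int (A (Suc i))" by (auto simp: fsA_gen_def)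
  define w where "w = int (block_start A (Suc i)) + y"
  have w: "int (block_start A (Suc i)) < w" "w \<le> int (block_start A (Suc (Suc i)))"
    using y by (auto simp: w_def block_start_Suc)
  then have "\<bar>w\<bar> \<le> int (block_start A (Suc p))" using block_start_mono[of "Suc (Suc i)" "Suc p" A] i by auto
  then obtain x where x: "x \<in> fst Es" "g x = w" using fsB_gen_hom_surj[OF g] by blast
  have "block_index A p w = int (Suc i)" using block_index_eq[of "Suc i" p A w] w i by simp
  then have xf: "x \<in> fib \<phi> (fst Es) (int i + 1)" using x by (auto simp: mem_fib \<phi>_def split_base_apply)
  then show "\<exists>x\<in>fib \<phi> (fst Es) (int i + 1). (split_blocks A p Es g ! i) x = y"
    using x i by (intro bexI[OF _ xf]) (simp add: split_blocks_def \<phi>_def[symmetric] w_def)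
qed

lemma glue_data_split:
  assumes "fsB_obj Es" and "g \<in> fsB_hom Es (fsB_gen (block_start A (Suc p)))"
    and "\<forall>m. 1 \<le> m \<and> m \<le> p \<longrightarrow> A m \<ge> 1"
  shows "glue_data A p Es (split_base A p Es g) (split_centre A p Es g) (split_blocks A p Es g)"
  using split_base_fsB_hom[OF assms] split_centre_fsB_hom[OF assms(1,2)] split_blocks_fsA_hom[OF assms(2)]
  by (simp add: glue_data_def split_blocks_def)

lemma split_blocks_apply:
  assumes "1 \<le> m" "m \<le> p" "x \<in> fst Es" "split_base A p Es g x = int m"
  shows "(split_blocks A p Es g ! (m - 1)) x = g x - int (block_start A m)"
  using assms by (simp add: split_blocks_def mem_fib)

lemma glue_split:
  assumes o: "fsB_obj Es" and g: "g \<in> fsB_hom Es (fsB_gen (block_start A (Suc p)))"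
  shows "glue A Es (split_base A p Es g) (split_centre A p Es g) (split_blocks A p Es g) = g"
proof (rule ext)
  fix x
  define \<phi> where "\<phi> = split_base A p Es g"
  show "glue A Es \<phi> (split_centre A p Es g) (split_blocks A p Es g) x = g x"
  proof (cases "x \<in> fst Es")
    case False
    then show ?thesis using fsB_homD(5)[OF g] by (simp add: glue_def)
  next
    case x: True
    have sx: "snd Es x \<in> fst Es" "\<phi> (snd Es x) = - \<phi> x" "g (snd Es x) = - g x"
      using fsB_objD(3)[OF o x] split_base_involution[OF o g x] fsB_gen_hom_uminus[OF g x] by (simp_all add: \<phi>_def)
    have bound: "\<bar>\<phi> x\<bar> \<le> int p" using abs_block_index_le x by (simp add: \<phi>_def split_base_apply)
    consider "\<phi> x = 0" | "\<phi> x > 0" | "\<phi> x < 0" by linarith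
    then show ?thesis
    proof cases
      case 1
      then show ?thesis using x by (simp add: glue_def split_centre_def \<phi>_def[symmetric] mem_fib)
    next
      case 2
      define m where "m = nat (\<phi> x)"
      have "1 \<le> m" "m \<le> p" "\<phi> x = int m" using 2 bound by (auto simp: m_def)
      from split_blocks_apply[OF this(1,2) x this(3)[unfolded \<phi>_def]] show ?thesis
        using 2 x by (simp add: glue_def \<phi>_def[symmetric] m_def)
    next
      case 3
      define m where "m = nat (- \<phi> x)"
      have "1 \<le> m" "m \<le> p" "\<phi> (snd Es x) = int m" using 3 bound sx(2) by (auto simp: m_def)
      from split_blocks_apply[OF this(1,2) sx(1) this(3)[unfolded \<phi>_def]] show ?thesis
        using 3 x sx(3) by (simp add: glue_def \<phi>_def[symmetric] m_def)
    qed
  qed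
qed

lemma split_compose:
  fixes A :: "nat \<Rightarrow> nat" and p :: nat and g :: "int \<Rightarrow> int"
  assumes psi: "\<psi> \<in> fsB_hom Es' Es"
  defines "\<chi> \<equiv> compose (fst Es') (split_base A p Es g) \<psi>"
  shows "split_base A p Es' (compose (fst Es') g \<psi>) = \<chi>"
    "split_centre A p Es' (compose (fst Es') g \<psi>) = compose (fib \<chi> (fst Es') 0) (split_centre A p Es g) \<psi>"
    "split_blocks A p Es' (compose (fst Es') g \<psi>) = map (\<lambda>i. compose (fib \<chi> (fst Es') (int i + 1)) (split_blocks A p Es g ! i) \<psi>) [0..<p]"
proof -
  have px: "\<And>x. x \<in> fst Es' \<Longrightarrow> \<psi> x \<in> fst Es" using fsB_homD(4)[OF psi] .
  show d: "split_base A p Es' (compose (fst Es') g \<psi>) = \<chi>"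
    unfolding \<chi>_def by (rule ext) (simp add: split_base_def compose_def px)
  have fibm: "\<And>x i. x \<in> fib \<chi> (fst Es') i \<Longrightarrow> \<psi> x \<in> fib (split_base A p Es g) (fst Es) i"
    using px by (auto simp: mem_fib \<chi>_def compose_def)
  show "split_centre A p Es' (compose (fst Es') g \<psi>) = compose (fib \<chi> (fst Es') 0) (split_centre A p Es g) \<psi>"
    unfolding split_centre_def d
  proof (rule ext)
    fix x show "restrict (compose (fst Es') g \<psi>) (fib \<chi> (fst Es') 0) x =
       compose (fib \<chi> (fst Es') 0) (restrict g (fib (split_base A p Es g) (fst Es) 0)) \<psi> x"
      using fibm[of x 0] by (cases "x \<in> fib \<chi> (fst Es') 0") (auto simp: compose_def mem_fib)
  qed
  show "split_blocks A p Es' (compose (fst Es') g \<psi>) = map (\<lambda>i. compose (fib \<chi> (fst Es') (int i + 1)) (split_blocks A p Es g ! i) \<psi>) [0..<p]"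
  proof (rule nth_equalityI)
    fix i assume "i < length (split_blocks A p Es' (compose (fst Es') g \<psi>))"
    then have i: "i < p" by (simp add: split_blocks_def)
    show "split_blocks A p Es' (compose (fst Es') g \<psi>) ! i = map (\<lambda>i. compose (fib \<chi> (fst Es') (int i + 1)) (split_blocks A p Es g ! i) \<psi>) [0..<p] ! i"
    proof (rule ext)
      fix x
      show "(split_blocks A p Es' (compose (fst Es') g \<psi>) ! i) x = (map (\<lambda>i. compose (fib \<chi> (fst Es') (int i + 1)) (split_blocks A p Es g ! i) \<psi>) [0..<p] ! i) x"
        using fibm[of x "int i + 1"] i unfolding split_blocks_def d
        by (cases "x \<in> fib \<chi> (fst Es') (int i + 1)") (auto simp: compose_def mem_fib)
    qed
  qed (simp add: split_blocks_def)
qed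

lemma split_eq_imp_eq:
  assumes o: "fsB_obj Es"
    and g1: "g1 \<in> fsB_hom Es (fsB_gen (block_start A (Suc p)))" and g2: "g2 \<in> fsB_hom Es (fsB_gen (block_start A (Suc p)))"
    and "split_base A p Es g1 = split_base A p Es g2" "split_centre A p Es g1 = split_centre A p Es g2"
    "split_blocks A p Es g1 = split_blocks A p Es g2"
  shows "g1 = g2"
proof -
  have "g1 = glue A Es (split_base A p Es g1) (split_centre A p Es g1) (split_blocks A p Es g1)"
    by (rule glue_split[OF o g1, symmetric])
  also have "\<dots> = glue A Es (split_base A p Es g2) (split_centre A p Es g2) (split_blocks A p Es g2)"
    by (simp only: assms(4-6))
  also have "\<dots> = g2" by (rule glue_split[OF o g2])
  finally show ?thesis .
qed

lemma compose_glue_eq: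
  assumes o': "fsB_obj E'" and o: "fsB_obj E" and psi: "\<psi> \<in> fsB_hom E' E"
    and v: "glue_data A p E \<phi> f0 fs" and g': "g' \<in> fsB_hom E' (fsB_gen (block_start A (Suc p)))"
    and base: "split_base A p E' g' = compose (fst E') \<phi> \<psi>"
    and centre: "split_centre A p E' g' = compose (fib (compose (fst E') \<phi> \<psi>) (fst E') 0) f0 \<psi>"
    and blocks: "\<forall>i<p. split_blocks A p E' g' ! i = compose (fib (compose (fst E') \<phi> \<psi>) (fst E') (int i + 1)) (fs ! i) \<psi>"
  shows "compose (fst E') (glue A E \<phi> f0 fs) \<psi> = g'"
proof (rule split_eq_imp_eq[OF o' _ g'])
  note dc = split_compose[OF psi, of A p "glue A E \<phi> f0 fs", unfolded split_glue[OF o v]]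
  show "compose (fst E') (glue A E \<phi> f0 fs) \<psi> \<in> fsB_hom E' (fsB_gen (block_start A (Suc p)))"
    by (rule fsB_hom_compose[OF o' psi glue_fsB_hom[OF o v]])
  show "split_base A p E' (compose (fst E') (glue A E \<phi> f0 fs) \<psi>) = split_base A p E' g'"
    using dc(1) base by simp
  show "split_centre A p E' (compose (fst E') (glue A E \<phi> f0 fs) \<psi>) = split_centre A p E' g'"
    using dc(2) centre by simp
  show "split_blocks A p E' (compose (fst E') (glue A E \<phi> f0 fs) \<psi>) = split_blocks A p E' g'"
    using dc(3) blocks by (auto simp: split_blocks_def intro!: nth_equalityI)
qed

section \<open>Elementary tensors and factorwise linear maps\<close>

definition tensor_val :: "('x \<Rightarrow> complex) list \<Rightarrow> 'x list \<Rightarrow> complex" where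
  "tensor_val ws xs = (if length xs = length ws then (\<Prod>i<length ws. (ws ! i) (xs ! i)) else 0)"

lemma tensor_val_simps[simp]: "tensor_val [] [] = 1" "tensor_val (w#ws) [] = 0" "tensor_val [] (x#xs) = 0"
  by (simp_all add: tensor_val_def)
lemma tensor_val_Cons[simp]: "tensor_val (w#ws) (x#xs) = w x * tensor_val ws xs"
  unfolding tensor_val_def length_Cons prod.lessThan_Suc_shift by simp

lemma elem_tensor_tensor_val: "elem_tensor v ws (b, xs) = v b * tensor_val ws xs"
  by (simp add: elem_tensor_def tensor_val_def)

lemma tensor_val_nonzero: "tensor_val ws xs \<noteq> 0 \<Longrightarrow> length xs = length ws \<and> (\<forall>i<length ws. (ws ! i) (xs ! i) \<noteq> 0)"
  by (auto simp: tensor_val_def split: if_splits)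

text \<open>\<open>apply_factors [h\<^sub>1, \<dots>, h\<^sub>k] t\<close> is \<open>(h\<^sub>1 \<otimes> \<dots> \<otimes> h\<^sub>k) t\<close>, reading \<open>t\<close> as a function of \<open>k\<close> arguments.\<close>

fun apply_factors :: "(('x \<Rightarrow> complex) \<Rightarrow> ('y \<Rightarrow> complex)) list \<Rightarrow> ('x list \<Rightarrow> complex) \<Rightarrow> 'y list \<Rightarrow> complex" where
  "apply_factors [] t ys = (if ys = [] then t [] else 0)"
| "apply_factors (h#hs) t [] = 0"
| "apply_factors (h#hs) t (y#ys) = h (\<lambda>x. apply_factors hs (\<lambda>xs. t (x # xs)) ys) y"

definition zip_apply :: "(('x \<Rightarrow> complex) \<Rightarrow> ('y \<Rightarrow> complex)) list \<Rightarrow> ('x \<Rightarrow> complex) list \<Rightarrow> ('y \<Rightarrow> complex) list" where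
  "zip_apply hs ws = map (\<lambda>(h,w). h w) (zip hs ws)"

lemma zip_apply_simps[simp]: "zip_apply [] ws = []" "zip_apply (h#hs) (w#ws) = h w # zip_apply hs ws"
  by (simp_all add: zip_apply_def)

lemma sum_list_map_cong: "(\<And>x. x \<in> set L \<Longrightarrow> f x = g x) \<Longrightarrow> (\<Sum>x\<leftarrow>L. f x) = (\<Sum>x\<leftarrow>L. g x)"
  by (induct L) auto

lemma sum_list_nonzero: "(\<Sum>x\<leftarrow>L. f x) \<noteq> (0::complex) \<Longrightarrow> \<exists>x\<in>set L. f x \<noteq> 0"
  by (induct L) auto

lemma apply_factors_sum_list_all:
  assumes "\<forall>i<length hs. fn_linear_on (V i) (W i) (hs!i) \<and> fn_subspace (V i)"
    and "\<forall>\<tau>\<in>set L. length (wsf \<tau>) = length hs \<and> (\<forall>i<length hs. wsf \<tau> ! i \<in> V i)"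
  shows "apply_factors hs (\<lambda>xs. \<Sum>\<tau>\<leftarrow>L. cf \<tau> * tensor_val (wsf \<tau>) xs) =
    (\<lambda>ys. \<Sum>\<tau>\<leftarrow>L. cf \<tau> * tensor_val (zip_apply hs (wsf \<tau>)) ys)"
  using assms
proof (induction hs arbitrary: V W cf wsf)
  case Nil
  then have "(\<lambda>xs. \<Sum>\<tau>\<leftarrow>L. cf \<tau> * tensor_val (wsf \<tau>) xs) = (\<lambda>ys. \<Sum>\<tau>\<leftarrow>L. cf \<tau> * tensor_val (zip_apply [] (wsf \<tau>)) ys)"
    by (intro ext sum_list_map_cong) simp
  moreover have "(\<Sum>\<tau>\<leftarrow>L. cf \<tau> * tensor_val (zip_apply [] (wsf \<tau>)) (y # ys)) = 0" for y ys
    by simp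
  ultimately show ?case by (auto intro!: ext simp: neq_Nil_conv)
next
  case (Cons h hs)
  have ws: "hd (wsf \<tau>) \<in> V 0" "length (tl (wsf \<tau>)) = length hs" "\<forall>i<length hs. tl (wsf \<tau>) ! i \<in> V (Suc i)"
    "tensor_val (wsf \<tau>) (x # xs) = hd (wsf \<tau>) x * tensor_val (tl (wsf \<tau>)) xs"
    "tensor_val (zip_apply (h # hs) (wsf \<tau>)) (x' # xs') = h (hd (wsf \<tau>)) x' * tensor_val (zip_apply hs (tl (wsf \<tau>))) xs'"
    "tensor_val (zip_apply (h # hs) (wsf \<tau>)) [] = 0"
    if "\<tau> \<in> set L" for \<tau> x xs x' xs'
  proof -
    from Cons.prems(2) that have "length (wsf \<tau>) = Suc (length hs)" "\<forall>i<Suc (length hs). wsf \<tau> ! i \<in> V i"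
      by auto
    then show "hd (wsf \<tau>) \<in> V 0" "length (tl (wsf \<tau>)) = length hs" "\<forall>i<length hs. tl (wsf \<tau>) ! i \<in> V (Suc i)"
      "tensor_val (wsf \<tau>) (x # xs) = hd (wsf \<tau>) x * tensor_val (tl (wsf \<tau>)) xs"
      "tensor_val (zip_apply (h # hs) (wsf \<tau>)) (x' # xs') = h (hd (wsf \<tau>)) x' * tensor_val (zip_apply hs (tl (wsf \<tau>))) xs'"
      "tensor_val (zip_apply (h # hs) (wsf \<tau>)) [] = 0"
      by (cases "wsf \<tau>"; force)+
  qed
  have h: "fn_linear_on (V 0) (W 0) h" "fn_subspace (V 0)"
    and hs: "\<forall>i<length hs. fn_linear_on (V (Suc i)) (W (Suc i)) (hs ! i) \<and> fn_subspace (V (Suc i))"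
    using Cons.prems(1) by auto
  show ?case
  proof (rule ext)
    fix ys show "apply_factors (h # hs) (\<lambda>xs. \<Sum>\<tau>\<leftarrow>L. cf \<tau> * tensor_val (wsf \<tau>) xs) ys =
      (\<Sum>\<tau>\<leftarrow>L. cf \<tau> * tensor_val (zip_apply (h # hs) (wsf \<tau>)) ys)"
    proof (cases ys)
      case Nil
      have "(\<Sum>\<tau>\<leftarrow>L. cf \<tau> * tensor_val (zip_apply (h # hs) (wsf \<tau>)) []) = (\<Sum>\<tau>\<leftarrow>L. 0)"
        by (rule sum_list_map_cong) (simp add: ws(6))
      then show ?thesis using Nil by simp
    next
      case (Cons y ys')
      let ?c = "\<lambda>\<tau>. cf \<tau> * tensor_val (zip_apply hs (tl (wsf \<tau>))) ys'"
      \<comment> \<open>peel off the first tensor factor, then use linearity of \<open>h\<close> on the resulting sum\<close>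
      have peel: "(\<lambda>xs. \<Sum>\<tau>\<leftarrow>L. cf \<tau> * tensor_val (wsf \<tau>) (x # xs)) =
          (\<lambda>xs. \<Sum>\<tau>\<leftarrow>L. (cf \<tau> * hd (wsf \<tau>) x) * tensor_val (tl (wsf \<tau>)) xs)" for x
        by (intro ext sum_list_map_cong) (simp add: ws(4) mult.assoc)
      have IH: "apply_factors hs (\<lambda>xs. \<Sum>\<tau>\<leftarrow>L. (cf \<tau> * hd (wsf \<tau>) x) * tensor_val (tl (wsf \<tau>)) xs) =
          (\<lambda>ys. \<Sum>\<tau>\<leftarrow>L. (cf \<tau> * hd (wsf \<tau>) x) * tensor_val (zip_apply hs (tl (wsf \<tau>))) ys)" for x
        by (rule Cons.IH[OF hs]) (use ws(2,3) in blast)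
      have swap: "(\<lambda>x. \<Sum>\<tau>\<leftarrow>L. (cf \<tau> * hd (wsf \<tau>) x) * tensor_val (zip_apply hs (tl (wsf \<tau>))) ys') =
          (\<lambda>x. \<Sum>\<tau>\<leftarrow>L. ?c \<tau> * hd (wsf \<tau>) x)"
        by (intro ext sum_list_map_cong) (simp only: mult_ac)
      have "apply_factors (h # hs) (\<lambda>xs. \<Sum>\<tau>\<leftarrow>L. cf \<tau> * tensor_val (wsf \<tau>) xs) ys =
          h (\<lambda>x. \<Sum>\<tau>\<leftarrow>L. ?c \<tau> * hd (wsf \<tau>) x) y"
        unfolding Cons apply_factors.simps(3) peel IH swap ..
      also have "\<dots> = (\<Sum>\<tau>\<leftarrow>L. ?c \<tau> * h (hd (wsf \<tau>)) y)"
        by (subst conjunct2[OF fn_linear_on_sum_list[OF h]]) (use ws(1) in auto)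
      also have "\<dots> = (\<Sum>\<tau>\<leftarrow>L. cf \<tau> * tensor_val (zip_apply (h # hs) (wsf \<tau>)) ys)"
        unfolding Cons by (rule sum_list_map_cong) (simp add: ws(5) mult_ac)
      finally show ?thesis .
    qed
  qed
qed

lemma apply_factors_sum_list:
  assumes "\<forall>i<length hs. fn_linear_on (V i) (W i) (hs!i) \<and> fn_subspace (V i)"
    and "\<forall>\<tau>\<in>set L. cf \<tau> \<noteq> 0 \<longrightarrow> length (wsf \<tau>) = length hs \<and> (\<forall>i<length hs. wsf \<tau> ! i \<in> V i)"
  shows "apply_factors hs (\<lambda>xs. \<Sum>\<tau>\<leftarrow>L. cf \<tau> * tensor_val (wsf \<tau>) xs) =
    (\<lambda>ys. \<Sum>\<tau>\<leftarrow>L. cf \<tau> * tensor_val (zip_apply hs (wsf \<tau>)) ys)"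
proof -
  let ?L = "filter (\<lambda>\<tau>. cf \<tau> \<noteq> 0) L"
  have "(\<Sum>\<tau>\<leftarrow>?L. cf \<tau> * F \<tau>) = (\<Sum>\<tau>\<leftarrow>L. cf \<tau> * F \<tau>)" for F :: "_ \<Rightarrow> complex"
    by (rule sum_list_map_filter) simp
  moreover have "apply_factors hs (\<lambda>xs. \<Sum>\<tau>\<leftarrow>?L. cf \<tau> * tensor_val (wsf \<tau>) xs) =
    (\<lambda>ys. \<Sum>\<tau>\<leftarrow>?L. cf \<tau> * tensor_val (zip_apply hs (wsf \<tau>)) ys)"
    by (rule apply_factors_sum_list_all[OF assms(1)]) (use assms(2) in auto)
  ultimately show ?thesis by simp
qed

section \<open>Elements of R as sums of elementary tensors\<close>

definition term_vec :: "complex \<times> (int \<Rightarrow> int) \<times> ('b \<Rightarrow> complex) \<times> ('a \<Rightarrow> complex) list \<Rightarrow> ((int \<Rightarrow> int) \<times> 'b \<times> 'a list \<Rightarrow> complex)" where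
  "term_vec \<tau> = (case \<tau> of (c, \<phi>, v, ws) \<Rightarrow> (\<lambda>z. c * summand_inj \<phi> (elem_tensor v ws) z))"

definition terms_sum :: "(complex \<times> (int \<Rightarrow> int) \<times> ('b \<Rightarrow> complex) \<times> ('a \<Rightarrow> complex) list) list \<Rightarrow> ((int \<Rightarrow> int) \<times> 'b \<times> 'a list \<Rightarrow> complex)" where
  "terms_sum L = (\<lambda>z. \<Sum>\<tau>\<leftarrow>L. term_vec \<tau> z)"

definition good_term :: "(fsB_ob \<Rightarrow> ('b \<Rightarrow> complex) set) \<Rightarrow> (nat \<Rightarrow> int set \<Rightarrow> ('a \<Rightarrow> complex) set) \<Rightarrow> nat \<Rightarrow> fsB_ob
   \<Rightarrow> complex \<times> (int \<Rightarrow> int) \<times> ('b \<Rightarrow> complex) \<times> ('a \<Rightarrow> complex) list \<Rightarrow> bool" where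
  "good_term V0 Vs p Es \<tau> = (case \<tau> of (c, \<phi>, v, ws) \<Rightarrow> \<phi> \<in> fsB_hom Es (fsB_gen p) \<and> v \<in> V0 (fibB \<phi> Es) \<and>
     length ws = p \<and> (\<forall>i<p. ws ! i \<in> Vs i (fib \<phi> (fst Es) (int i + 1))))"

lemma term_vec_apply: "term_vec (c, \<phi>, v, ws) (\<phi>', b, xs) = (if \<phi>' = \<phi> then c * (v b * tensor_val ws xs) else 0)"
  by (simp add: term_vec_def summand_inj_def elem_tensor_tensor_val)

lemma terms_sum_append: "terms_sum (L1 @ L2) = (\<lambda>z. terms_sum L1 z + terms_sum L2 z)"
  by (simp add: terms_sum_def)

lemma terms_sum_Cons: "terms_sum (x # L) z = term_vec x z + terms_sum L z"
  by (simp add: terms_sum_def)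

lemma terms_sum_Nil: "terms_sum [] = (\<lambda>z. 0)"
  by (simp add: terms_sum_def)

lemma terms_sum_scale: "(\<lambda>z. k * terms_sum L z) = terms_sum (map (\<lambda>(c, \<phi>, v, ws). (k * c, \<phi>, v, ws)) L)"
  unfolding terms_sum_def
  by (rule ext) (induct L, auto simp: term_vec_def distrib_left mult.assoc)

lemma mem_R_ob:
  "g \<in> R_ob Nob Ms Es \<longleftrightarrow>
    (\<forall>\<phi> a. \<phi> \<notin> fsB_hom Es (fsB_gen (length Ms)) \<longrightarrow> g (\<phi>, a) = 0) \<and>
    (\<forall>\<phi>\<in>fsB_hom Es (fsB_gen (length Ms)). (\<lambda>a. g (\<phi>, a)) \<in>
       tensor_space (Nob (fibB \<phi> Es)) (map (\<lambda>i. fst (Ms ! i) (fib \<phi> (fst Es) (int i + 1))) [0..<length Ms]))"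
proof -
  have "(\<lambda>(b, xs). g (\<phi>, b, xs)) = (\<lambda>a. g (\<phi>, a))" for \<phi> by auto
  then show ?thesis unfolding R_ob_def by auto
qed

lemma R_ob_subspace: "fn_subspace (R_ob Nob Ms Es)"
proof -
  let ?T = "\<lambda>\<phi>. tensor_space (Nob (fibB \<phi> Es)) (map (\<lambda>i. fst (Ms ! i) (fib \<phi> (fst Es) (int i + 1))) [0..<length Ms])"
  have sub: "fn_subspace (?T \<phi>)" for \<phi> unfolding tensor_space_def by (rule fn_span_subspace)
  show ?thesis
    unfolding fn_subspace_def
  proof (intro conjI ballI allI)
    show "(\<lambda>_. 0) \<in> R_ob Nob Ms Es"
      unfolding mem_R_ob using fn_subspace_zero[OF sub] by auto
  next
    fix x y assume "x \<in> R_ob Nob Ms Es" "y \<in> R_ob Nob Ms Es"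
    then show "(\<lambda>a. x a + y a) \<in> R_ob Nob Ms Es"
      unfolding mem_R_ob using fn_subspace_add[OF sub] by auto
  next
    fix c x assume "x \<in> R_ob Nob Ms Es"
    then show "(\<lambda>a. c * x a) \<in> R_ob Nob Ms Es"
      unfolding mem_R_ob using fn_subspace_scale[OF sub] by auto
  qed
qed

lemma term_vec_in_R_ob:
  assumes "good_term Nob (\<lambda>i. fst (Ms ! i)) (length Ms) Es \<tau>"
  shows "term_vec \<tau> \<in> R_ob Nob Ms Es"
proof -
  obtain c \<phi> v ws where t: "\<tau> = (c, \<phi>, v, ws)" by (cases \<tau>) auto
  have v: "\<phi> \<in> fsB_hom Es (fsB_gen (length Ms))" "v \<in> Nob (fibB \<phi> Es)" "length ws = length Ms"
    "\<forall>i<length Ms. ws ! i \<in> fst (Ms ! i) (fib \<phi> (fst Es) (int i + 1))"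
    using assms by (auto simp: good_term_def t)
  let ?T = "\<lambda>\<phi>. tensor_space (Nob (fibB \<phi> Es)) (map (\<lambda>i. fst (Ms ! i) (fib \<phi> (fst Es) (int i + 1))) [0..<length Ms])"
  have sub: "fn_subspace (?T \<phi>')" for \<phi>' unfolding tensor_space_def by (rule fn_span_subspace)
  have "elem_tensor v ws \<in> ?T \<phi>"
    unfolding tensor_space_def by (rule fn_span_superset) (use v in auto)
  then have "(\<lambda>a. c * elem_tensor v ws a) \<in> ?T \<phi>" by (rule fn_subspace_scale[OF sub])
  moreover have tv: "term_vec \<tau> (\<phi>', a) = (if \<phi>' = \<phi> then c * elem_tensor v ws a else 0)" for \<phi>' a
    by (cases a) (simp add: t term_vec_apply elem_tensor_tensor_val)
  then have "(\<lambda>a. term_vec \<tau> (\<phi>', a)) = (if \<phi>' = \<phi> then (\<lambda>a. c * elem_tensor v ws a) else (\<lambda>a. 0))" for \<phi>'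
    by auto
  ultimately show ?thesis
    unfolding mem_R_ob using v(1) tv fn_subspace_zero[OF sub] by auto
qed

lemma terms_sum_in_R_ob:
  assumes "\<forall>\<tau>\<in>set L. good_term Nob (\<lambda>i. fst (Ms ! i)) (length Ms) Es \<tau>"
  shows "terms_sum L \<in> R_ob Nob Ms Es"
  using assms
proof (induction L)
  case Nil
  then show ?case using fn_subspace_zero[OF R_ob_subspace] by (simp add: terms_sum_Nil)
next
  case (Cons \<tau> L)
  have "terms_sum (\<tau> # L) = (\<lambda>z. term_vec \<tau> z + terms_sum L z)" by (simp add: terms_sum_def)
  then show ?case using fn_subspace_add[OF R_ob_subspace term_vec_in_R_ob Cons.IH] Cons.prems by simp
qed

lemma tensor_slice_terms_sum:
  assumes s: "s \<in> tensor_space (Nz (fibB \<phi> Es)) (map (\<lambda>i. Vs i (fib \<phi> (fst Es) (int i + 1))) [0..<p])"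
    and ph: "\<phi> \<in> fsB_hom Es (fsB_gen p)"
  shows "\<exists>L. (\<forall>\<tau>\<in>set L. good_term Nz Vs p Es \<tau>) \<and> terms_sum L = (\<lambda>z. if fst z = \<phi> then s (snd z) else 0)"
proof -
  obtain P where s: "s = (\<lambda>z. \<Sum>(c,u)\<leftarrow>P. c * u z)"
    and P: "\<forall>q\<in>set P. \<exists>v ws. snd q = elem_tensor v ws \<and> good_term Nz Vs p Es (fst q, \<phi>, v, ws)"
    using s ph unfolding tensor_space_def fn_span_sum_list by (fastforce simp: good_term_def)
  from P have "\<exists>L. (\<forall>\<tau>\<in>set L. good_term Nz Vs p Es \<tau>) \<and>
      terms_sum L = (\<lambda>z. if fst z = \<phi> then (\<Sum>(c,u)\<leftarrow>P. c * u (snd z)) else 0)"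
  proof (induction P)
    case Nil
    then show ?case by (intro exI[of _ "[]"]) (auto simp: terms_sum_Nil)
  next
    case (Cons q P)
    obtain L where L: "\<forall>\<tau>\<in>set L. good_term Nz Vs p Es \<tau>"
      "terms_sum L = (\<lambda>z. if fst z = \<phi> then (\<Sum>(c,u)\<leftarrow>P. c * u (snd z)) else 0)"
      using Cons by auto
    obtain v ws where q: "snd q = elem_tensor v ws" "good_term Nz Vs p Es (fst q, \<phi>, v, ws)"
      using Cons.prems by auto
    have "terms_sum ((fst q, \<phi>, v, ws) # L) = (\<lambda>z. if fst z = \<phi> then (\<Sum>(c,u)\<leftarrow>q # P. c * u (snd z)) else 0)"
      using L(2) q(1) by (auto intro!: ext simp: terms_sum_Cons term_vec_apply elem_tensor_tensor_val case_prod_beta)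
    then show ?case using L(1) q(2) by (intro exI[of _ "(fst q, \<phi>, v, ws) # L"]) auto
  qed
  then show ?thesis unfolding s by simp
qed

lemma finite_fsB_hom_gen:
  assumes "finite (fst Es)"
  shows "finite (fsB_hom Es (fsB_gen p))"
proof (rule finite_subset)
  show "fsB_hom Es (fsB_gen p) \<subseteq> fst Es \<rightarrow>\<^sub>E fst (fsB_gen p)" by (auto simp: fsB_hom_def)
  show "finite (fst Es \<rightarrow>\<^sub>E fst (fsB_gen p))"
    by (rule finite_PiE) (use assms in \<open>auto simp: fsB_gen_simps\<close>)
qed

lemma R_ob_terms_sum:
  assumes fin: "finite (fst Es)" and t: "t \<in> R_ob Nob Ms Es"
  shows "\<exists>L. (\<forall>\<tau>\<in>set L. good_term Nob (\<lambda>i. fst (Ms ! i)) (length Ms) Es \<tau>) \<and> t = terms_sum L"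
proof -
  let ?H = "fsB_hom Es (fsB_gen (length Ms))"
  let ?good = "\<lambda>L. \<forall>\<tau>\<in>set L. good_term Nob (\<lambda>i. fst (Ms ! i)) (length Ms) Es \<tau>"
  have "\<exists>L. ?good L \<and> terms_sum L = (\<lambda>z. if fst z \<in> F then t z else 0)" if "finite F" "F \<subseteq> ?H" for F
    using that
  proof (induction F rule: finite_induct)
    case empty
    then show ?case by (intro exI[of _ "[]"]) (auto simp: terms_sum_Nil)
  next
    case (insert \<phi> F)
    obtain L1 where L1: "?good L1" "terms_sum L1 = (\<lambda>z. if fst z \<in> F then t z else 0)"
      using insert by auto
    have "(\<lambda>a. t (\<phi>, a)) \<in> tensor_space (Nob (fibB \<phi> Es)) (map (\<lambda>i. fst (Ms ! i) (fib \<phi> (fst Es) (int i + 1))) [0..<length Ms])"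
      using t insert.prems unfolding mem_R_ob by blast
    then obtain L2 where L2: "?good L2" "terms_sum L2 = (\<lambda>z. if fst z = \<phi> then t (\<phi>, snd z) else 0)"
      using tensor_slice_terms_sum[where Vs = "\<lambda>i. fst (Ms ! i)"] insert.prems by blast
    have "terms_sum (L1 @ L2) = (\<lambda>z. if fst z \<in> insert \<phi> F then t z else 0)"
      unfolding terms_sum_append L1(2) L2(2) using insert.hyps(2) by (auto intro!: ext)
    then show ?case using L1(1) L2(1) by (intro exI[of _ "L1 @ L2"]) auto
  qed
  then obtain L where L: "?good L" "terms_sum L = (\<lambda>z. if fst z \<in> ?H then t z else 0)"
    using finite_fsB_hom_gen[OF fin] by blast
  moreover have "t = (\<lambda>z. if fst z \<in> ?H then t z else 0)"
    using t unfolding mem_R_ob by (auto intro!: ext)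
  ultimately show ?thesis by auto
qed

definition tensor_map :: "(fsB_ob \<Rightarrow> ('s \<Rightarrow> complex) \<Rightarrow> ('b \<Rightarrow> complex)) \<Rightarrow> (nat \<Rightarrow> int set \<Rightarrow> ('t \<Rightarrow> complex) \<Rightarrow> ('a \<Rightarrow> complex))
   \<Rightarrow> nat \<Rightarrow> fsB_ob \<Rightarrow> ((int \<Rightarrow> int) \<times> 's \<times> 't list \<Rightarrow> complex) \<Rightarrow> ((int \<Rightarrow> int) \<times> 'b \<times> 'a list \<Rightarrow> complex)" where
  "tensor_map e0 es p Es t = (\<lambda>(\<phi>, b, ys). if \<phi> \<in> fsB_hom Es (fsB_gen p) then
     e0 (fibB \<phi> Es) (\<lambda>b0. apply_factors (map (\<lambda>i. es i (fib \<phi> (fst Es) (int i + 1))) [0..<p]) (\<lambda>xs. t (\<phi>, b0, xs)) ys) b else 0)"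

definition term_map :: "(fsB_ob \<Rightarrow> ('s \<Rightarrow> complex) \<Rightarrow> ('b \<Rightarrow> complex)) \<Rightarrow> (nat \<Rightarrow> int set \<Rightarrow> ('t \<Rightarrow> complex) \<Rightarrow> ('a \<Rightarrow> complex))
   \<Rightarrow> nat \<Rightarrow> fsB_ob \<Rightarrow> complex \<times> (int \<Rightarrow> int) \<times> ('s \<Rightarrow> complex) \<times> ('t \<Rightarrow> complex) list
   \<Rightarrow> complex \<times> (int \<Rightarrow> int) \<times> ('b \<Rightarrow> complex) \<times> ('a \<Rightarrow> complex) list" where
  "term_map e0 es p Es \<tau> = (case \<tau> of (c, \<phi>, v, ws) \<Rightarrow>
     (c, \<phi>, e0 (fibB \<phi> Es) v, map (\<lambda>i. es i (fib \<phi> (fst Es) (int i + 1)) (ws ! i)) [0..<p]))"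

lemma zip_apply_map:
  assumes "length ws = p"
  shows "zip_apply (map (\<lambda>i. h i) [0..<p]) ws = map (\<lambda>i. h i (ws ! i)) [0..<p]"
  using assms by (auto simp: zip_apply_def intro!: nth_equalityI)

lemma apply_factors_terms_sum:
  fixes L :: "(complex \<times> (int \<Rightarrow> int) \<times> ('s \<Rightarrow> complex) \<times> ('t \<Rightarrow> complex) list) list"
    and es :: "nat \<Rightarrow> int set \<Rightarrow> ('t \<Rightarrow> complex) \<Rightarrow> ('a \<Rightarrow> complex)"
  assumes val: "\<forall>\<tau>\<in>set L. good_term V0 Vs p Es \<tau>"
    and lin: "\<forall>i<p. fn_linear_on (Vs i (fib \<phi> (fst Es) (int i + 1))) (Ws i (fib \<phi> (fst Es) (int i + 1)))
        (es i (fib \<phi> (fst Es) (int i + 1))) \<and> fn_subspace (Vs i (fib \<phi> (fst Es) (int i + 1)))"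
  shows "apply_factors (map (\<lambda>i. es i (fib \<phi> (fst Es) (int i + 1))) [0..<p]) (\<lambda>xs. terms_sum L (\<phi>, b0, xs)) ys =
    (\<Sum>(c, \<phi>', v, ws)\<leftarrow>L. if \<phi>' = \<phi>
       then c * v b0 * tensor_val (zip_apply (map (\<lambda>i. es i (fib \<phi> (fst Es) (int i + 1))) [0..<p]) ws) ys else 0)"
proof -
  define hs where "hs = map (\<lambda>i. es i (fib \<phi> (fst Es) (int i + 1))) [0..<p]"
  define cf where "cf = (\<lambda>(c, \<phi>', v::'s \<Rightarrow> complex, ws::('t \<Rightarrow> complex) list). if \<phi>' = \<phi> then c * v b0 else 0)"
  define wsf where "wsf = (\<lambda>\<tau>::complex \<times> (int \<Rightarrow> int) \<times> ('s \<Rightarrow> complex) \<times> ('t \<Rightarrow> complex) list. snd (snd (snd \<tau>)))"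
  have sl: "(\<lambda>xs. terms_sum L (\<phi>, b0, xs)) = (\<lambda>xs. \<Sum>\<tau>\<leftarrow>L. cf \<tau> * tensor_val (wsf \<tau>) xs)"
    unfolding terms_sum_def
    by (rule ext, rule sum_list_map_cong) (auto simp: cf_def wsf_def term_vec_apply split: prod.splits)
  have "apply_factors hs (\<lambda>xs. \<Sum>\<tau>\<leftarrow>L. cf \<tau> * tensor_val (wsf \<tau>) xs) =
      (\<lambda>ys. \<Sum>\<tau>\<leftarrow>L. cf \<tau> * tensor_val (zip_apply hs (wsf \<tau>)) ys)"
  proof (rule apply_factors_sum_list)
    show "\<forall>i<length hs. fn_linear_on (Vs i (fib \<phi> (fst Es) (int i + 1))) (Ws i (fib \<phi> (fst Es) (int i + 1))) (hs ! i)
        \<and> fn_subspace (Vs i (fib \<phi> (fst Es) (int i + 1)))"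
      using lin by (simp add: hs_def)
    show "\<forall>\<tau>\<in>set L. cf \<tau> \<noteq> 0 \<longrightarrow> length (wsf \<tau>) = length hs \<and> (\<forall>i<length hs. wsf \<tau> ! i \<in> Vs i (fib \<phi> (fst Es) (int i + 1)))"
      using val by (auto simp: cf_def wsf_def hs_def good_term_def split: if_splits)
  qed
  then show ?thesis
    unfolding hs_def[symmetric] sl by (auto intro!: sum_list_map_cong simp: cf_def wsf_def)
qed

lemma tensor_map_terms_sum:
  fixes e0 :: "fsB_ob \<Rightarrow> ('s \<Rightarrow> complex) \<Rightarrow> ('b \<Rightarrow> complex)"
    and es :: "nat \<Rightarrow> int set \<Rightarrow> ('t \<Rightarrow> complex) \<Rightarrow> ('a \<Rightarrow> complex)"
  assumes val: "\<forall>\<tau>\<in>set L. good_term V0 Vs p Es \<tau>"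
    and lin: "\<forall>\<phi>\<in>fsB_hom Es (fsB_gen p). fn_linear_on (V0 (fibB \<phi> Es)) (W0 (fibB \<phi> Es)) (e0 (fibB \<phi> Es)) \<and> fn_subspace (V0 (fibB \<phi> Es)) \<and>
       (\<forall>i<p. fn_linear_on (Vs i (fib \<phi> (fst Es) (int i + 1))) (Ws i (fib \<phi> (fst Es) (int i + 1))) (es i (fib \<phi> (fst Es) (int i + 1)))
            \<and> fn_subspace (Vs i (fib \<phi> (fst Es) (int i + 1))))"
  shows "tensor_map e0 es p Es (terms_sum L) = terms_sum (map (term_map e0 es p Es) L)"
proof (rule ext)
  fix z :: "(int \<Rightarrow> int) \<times> 'b \<times> 'a list"
  obtain \<phi> b ys where z: "z = (\<phi>, b, ys)" by (cases z) auto
  have terms: "\<exists>c v ws. \<tau> = (c, \<phi>', v, ws) \<and> \<phi>' \<in> fsB_hom Es (fsB_gen p) \<and> v \<in> V0 (fibB \<phi>' Es) \<and> length ws = p"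
    if "\<tau> \<in> set L" "fst (snd \<tau>) = \<phi>'" for \<tau> \<phi>'
    using val that by (cases \<tau>) (auto simp: good_term_def)
  show "tensor_map e0 es p Es (terms_sum L) z = terms_sum (map (term_map e0 es p Es) L) z"
  proof (cases "\<phi> \<in> fsB_hom Es (fsB_gen p)")
    case False
    have "terms_sum (map (term_map e0 es p Es) L) z = (\<Sum>\<tau>\<leftarrow>L. 0)"
      unfolding terms_sum_def map_map o_def
      by (rule sum_list_map_cong) (use terms False in \<open>force simp: z term_map_def term_vec_apply\<close>)
    then show ?thesis using False z by (simp add: tensor_map_def)
  next
    case ph: True
    let ?hs = "map (\<lambda>i. es i (fib \<phi> (fst Es) (int i + 1))) [0..<p]"
    let ?c = "\<lambda>(c, \<phi>', v, ws). if \<phi>' = \<phi> then c * tensor_val (zip_apply ?hs ws) ys else 0"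
    have e0: "fn_linear_on (V0 (fibB \<phi> Es)) (W0 (fibB \<phi> Es)) (e0 (fibB \<phi> Es))" "fn_subspace (V0 (fibB \<phi> Es))"
      using lin ph by auto
    have "(\<lambda>b0. apply_factors ?hs (\<lambda>xs. terms_sum L (\<phi>, b0, xs)) ys) = (\<lambda>b0. \<Sum>\<tau>\<leftarrow>L. ?c \<tau> * fst (snd (snd \<tau>)) b0)"
      unfolding apply_factors_terms_sum[where es = es and Vs = Vs and Ws = Ws and \<phi> = \<phi>,
          OF val lin[rule_format, OF ph, THEN conjunct2, THEN conjunct2]]
      by (intro ext sum_list_map_cong) (auto split: prod.splits)
    moreover have "e0 (fibB \<phi> Es) (\<lambda>b0. \<Sum>\<tau>\<leftarrow>L. ?c \<tau> * fst (snd (snd \<tau>)) b0) =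
        (\<lambda>b0. \<Sum>\<tau>\<leftarrow>L. ?c \<tau> * e0 (fibB \<phi> Es) (fst (snd (snd \<tau>))) b0)"
      by (rule conjunct2[OF fn_linear_on_sum_list[OF e0]]) (use terms in \<open>fastforce split: prod.splits if_splits\<close>)
    moreover have "?c \<tau> * e0 (fibB \<phi> Es) (fst (snd (snd \<tau>))) b = term_vec (term_map e0 es p Es \<tau>) (\<phi>, b, ys)"
      if "\<tau> \<in> set L" for \<tau>
    proof -
      obtain c \<phi>' v ws where \<tau>: "\<tau> = (c, \<phi>', v, ws)" by (cases \<tau>)
      have "length ws = p" using val that by (auto simp: \<tau> good_term_def)
      then show ?thesis by (auto simp: \<tau> term_map_def term_vec_apply zip_apply_map)
    qed
    ultimately show ?thesis
      unfolding z terms_sum_def map_map o_def using ph by (simp add: tensor_map_def cong: sum_list_map_cong)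
  qed
qed

type_synonym free_vec = "nat \<times> (int \<Rightarrow> int) \<Rightarrow> complex"
type_synonym split_index = "(int \<Rightarrow> int) \<times> (nat \<times> (int \<Rightarrow> int)) \<times> (nat \<times> (int \<Rightarrow> int)) list"

text \<open>\<open>S0\<close>, \<open>SS i\<close> are the chosen submodules of free modules with generator degrees \<open>ms0\<close>, \<open>MS i\<close>,
  and \<open>e0\<close>, \<open>ET i\<close> the epimorphisms onto \<open>N\<close>, \<open>M\<^sub>i\<close>.  \<open>R_free\<close> is \<open>R\<close> built from \<open>S0\<close> and the \<open>SS i\<close>;
  \<open>coords\<close> embeds it into the free module on the generators \<open>[-n\<^sub>J, n\<^sub>J]\<close>, one for each tuple \<open>J\<close>
  of generator indices, \<open>n\<^sub>J\<close> being the sum of the degrees in \<open>J\<close>.\<close>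

locale small_presentations =
  fixes Nob :: "fsB_ob \<Rightarrow> ('b \<Rightarrow> complex) set"
    and Nmor :: "fsB_ob \<Rightarrow> fsB_ob \<Rightarrow> (int \<Rightarrow> int) \<Rightarrow> ('b \<Rightarrow> complex) \<Rightarrow> ('b \<Rightarrow> complex)"
    and Ms :: "'a fsA_mod list"
    and Rmor :: "fsB_ob \<Rightarrow> fsB_ob \<Rightarrow> (int \<Rightarrow> int) \<Rightarrow> ((int \<Rightarrow> int) \<times> 'b \<times> 'a list \<Rightarrow> complex)
                   \<Rightarrow> ((int \<Rightarrow> int) \<times> 'b \<times> 'a list \<Rightarrow> complex)"
    and ms0 :: "nat list"
    and S0 :: "fsB_ob \<Rightarrow> free_vec set"
    and e0 :: "fsB_ob \<Rightarrow> free_vec \<Rightarrow> ('b \<Rightarrow> complex)"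
    and MS :: "nat \<Rightarrow> nat list"
    and SS :: "nat \<Rightarrow> int set \<Rightarrow> free_vec set"
    and ET :: "nat \<Rightarrow> int set \<Rightarrow> free_vec \<Rightarrow> ('a \<Rightarrow> complex)"
  assumes sub0: "is_submodule fsB_obj fsB_hom (free_ob fsB_hom (map fsB_gen ms0)) (free_mor fsB_hom fsB_comp (map fsB_gen ms0)) S0"
    and epi0: "is_epi fsB_obj fsB_hom S0 (free_mor fsB_hom fsB_comp (map fsB_gen ms0)) Nob Nmor e0"
    and subi: "\<forall>i<length Ms. is_submodule fsA_obj fsA_hom (free_ob fsA_hom (map fsA_gen (MS i))) (free_mor fsA_hom fsA_comp (map fsA_gen (MS i))) (SS i)"
    and epii: "\<forall>i<length Ms. is_epi fsA_obj fsA_hom (SS i) (free_mor fsA_hom fsA_comp (map fsA_gen (MS i))) (fst (Ms ! i)) (snd (Ms ! i)) (ET i)"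
    and MSpos: "\<forall>i<length Ms. \<forall>m\<in>set (MS i). 1 \<le> m"
    and Rspec: "R_mor_spec Nob Nmor Ms Rmor"
begin

abbreviation p :: nat where "p \<equiv> length Ms"
definition deg_lists :: "nat list list" where "deg_lists = ms0 # map MS [0..<p]"
definition tuples :: "nat list list" where "tuples = product_lists (map (\<lambda>l. [0..<length l]) deg_lists)"
definition degs :: "nat list \<Rightarrow> nat \<Rightarrow> nat" where "degs J = (\<lambda>l. deg_lists ! l ! (J ! l))"
definition glued_degs :: "nat list" where "glued_degs = map (\<lambda>J. block_start (degs J) (Suc p)) tuples"
definition glued_gens :: "fsB_ob list" where "glued_gens = map fsB_gen glued_degs"
definition free_factors :: "(nat \<times> (int \<Rightarrow> int)) fsA_mod list" where
  "free_factors = map (\<lambda>i. (SS i, free_mor fsA_hom fsA_comp (map fsA_gen (MS i)))) [0..<p]"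
abbreviation good_free_term :: "fsB_ob \<Rightarrow> complex \<times> (int \<Rightarrow> int) \<times> free_vec \<times> free_vec list \<Rightarrow> bool" where
  "good_free_term E \<equiv> good_term S0 (\<lambda>i. fst (free_factors ! i)) (length free_factors) E"
abbreviation good_R_term :: "fsB_ob \<Rightarrow> complex \<times> (int \<Rightarrow> int) \<times> ('b \<Rightarrow> complex) \<times> ('a \<Rightarrow> complex) list \<Rightarrow> bool" where
  "good_R_term E \<equiv> good_term Nob (\<lambda>i. fst (Ms ! i)) (length Ms) E"
definition R_free :: "fsB_ob \<Rightarrow> (split_index \<Rightarrow> complex) set" where "R_free E = R_ob S0 free_factors E"
definition split_tuple :: "nat list \<Rightarrow> fsB_ob \<Rightarrow> (int \<Rightarrow> int) \<Rightarrow> split_index" where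
  "split_tuple J E g = (split_base (degs J) p E g, (J ! 0, split_centre (degs J) p E g), map (\<lambda>i. (J ! Suc i, split_blocks (degs J) p E g ! i)) [0..<p])"
definition coords :: "fsB_ob \<Rightarrow> (split_index \<Rightarrow> complex) \<Rightarrow> free_vec" where
  "coords E t = (\<lambda>(k, g). if k < length tuples \<and> g \<in> fsB_hom E (glued_gens ! k) then t (split_tuple (tuples ! k) E g) else 0)"
definition R_coords :: "fsB_ob \<Rightarrow> free_vec set" where "R_coords E = coords E ` R_free E"
definition eta :: "fsB_ob \<Rightarrow> free_vec \<Rightarrow> ((int \<Rightarrow> int) \<times> 'b \<times> 'a list \<Rightarrow> complex)" where
  "eta E u = tensor_map e0 ET p E (inv_into (R_free E) (coords E) u)"
definition F_mor :: "fsB_ob \<Rightarrow> fsB_ob \<Rightarrow> (int \<Rightarrow> int) \<Rightarrow> free_vec \<Rightarrow> free_vec" where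
  "F_mor = free_mor fsB_hom fsB_comp glued_gens"

definition good_split :: "fsB_ob \<Rightarrow> split_index \<Rightarrow> bool" where
  "good_split E \<tau> = (case \<tau> of (\<phi>, (j0, f0), xs) \<Rightarrow> \<phi> \<in> fsB_hom E (fsB_gen p) \<and> j0 < length ms0 \<and>
     f0 \<in> fsB_hom (fibB \<phi> E) (fsB_gen (ms0 ! j0)) \<and> length xs = p \<and>
     (\<forall>i<p. fst (xs ! i) < length (MS i) \<and> snd (xs ! i) \<in> fsA_hom (fib \<phi> (fst E) (int i + 1)) (fsA_gen (MS i ! fst (xs ! i)))))"

lemma free_factors_simps: "length free_factors = p" "i < p \<Longrightarrow> fst (free_factors ! i) = SS i"
  by (simp_all add: free_factors_def)

lemma mem_tuples: "J \<in> set tuples \<longleftrightarrow> length J = Suc p \<and> J ! 0 < length ms0 \<and> (\<forall>i<p. J ! Suc i < length (MS i))"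
proof -
  have lenAL: "length deg_lists = Suc p" by (simp add: deg_lists_def)
  have "J \<in> set tuples \<longleftrightarrow> list_all2 (\<lambda>x ys. x \<in> set ys) J (map (\<lambda>l. [0..<length l]) deg_lists)"
    unfolding tuples_def product_lists_set by simp
  also have "\<dots> \<longleftrightarrow> length J = Suc p \<and> (\<forall>l<Suc p. J ! l < length (deg_lists ! l))"
    using lenAL by (auto simp: list_all2_conv_all_nth)
  also have "\<dots> \<longleftrightarrow> length J = Suc p \<and> J ! 0 < length ms0 \<and> (\<forall>i<p. J ! Suc i < length (MS i))"
    by (auto simp: deg_lists_def All_less_Suc2 nth_Cons' split: if_splits)
  finally show ?thesis .
qed

lemma degs_simps: "degs J 0 = ms0 ! (J ! 0)" "i < p \<Longrightarrow> degs J (Suc i) = MS i ! (J ! Suc i)"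
  by (simp_all add: degs_def deg_lists_def)

lemma degs_pos: "J \<in> set tuples \<Longrightarrow> \<forall>m. 1 \<le> m \<and> m \<le> p \<longrightarrow> degs J m \<ge> 1"
proof (intro allI impI)
  fix m assume J: "J \<in> set tuples" and m: "1 \<le> m \<and> m \<le> p"
  then obtain i where i: "m = Suc i" "i < p" by (cases m) auto
  have "J ! Suc i < length (MS i)" using J i mem_tuples by auto
  then have "MS i ! (J ! Suc i) \<in> set (MS i)" by simp
  then show "degs J m \<ge> 1" using MSpos i by (simp add: degs_simps)
qed

lemma glued_gens_simps: "length glued_gens = length tuples" "k < length tuples \<Longrightarrow> glued_gens ! k = fsB_gen (block_start (degs (tuples ! k)) (Suc p))"
  by (simp_all add: glued_gens_def glued_degs_def)

lemma R_free_support: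
  assumes o: "fsB_obj E" and t: "t \<in> R_free E" and nz: "t \<tau> \<noteq> 0"
  shows "good_split E \<tau>"
proof -
  obtain L where L: "\<forall>\<tau>\<in>set L. good_free_term E \<tau>" "t = terms_sum L"
    using R_ob_terms_sum[OF fsB_objD(1)[OF o] t[unfolded R_free_def]] by blast
  obtain \<phi> b xs where tau: "\<tau> = (\<phi>, b, xs)" by (cases \<tau>) auto
  obtain j0 f0 where b: "b = (j0, f0)" by (cases b) auto
  obtain x where x: "x \<in> set L" "term_vec x \<tau> \<noteq> 0" using sum_list_nonzero[where f="\<lambda>x. term_vec x \<tau>" and L=L] nz L(2) by (auto simp: terms_sum_def)
  obtain c \<phi>' v ws where xx: "x = (c, \<phi>', v, ws)" by (cases x) auto
  have vx: "good_free_term E x" using L(1) x(1) by blast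
  have nz2: "\<phi>' = \<phi>" "v b \<noteq> 0" "tensor_val ws xs \<noteq> 0" using x(2) unfolding xx tau by (auto simp: term_vec_apply split: if_splits)
  have ph: "\<phi> \<in> fsB_hom E (fsB_gen p)" and vS: "v \<in> S0 (fibB \<phi> E)" and lws: "length ws = p"
    and wsS: "\<forall>i<p. ws ! i \<in> SS i (fib \<phi> (fst E) (int i + 1))"
    using vx nz2(1) by (auto simp: good_term_def xx free_factors_simps)
  have fo: "fsB_obj (fibB \<phi> E)" using fibB_obj[OF o ph] .
  have "v \<in> free_ob fsB_hom (map fsB_gen ms0) (fibB \<phi> E)" using submoduleD(1)[OF sub0 fo] vS by blast
  from free_obD[OF this, of j0 f0] have "j0 < length (map fsB_gen ms0) \<and> f0 \<in> fsB_hom (fibB \<phi> E) (map fsB_gen ms0 ! j0)"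
    using nz2(2) b by blast
  then have j00: "j0 < length ms0" and "f0 \<in> fsB_hom (fibB \<phi> E) (map fsB_gen ms0 ! j0)" by auto
  then have j0: "j0 < length ms0" "f0 \<in> fsB_hom (fibB \<phi> E) (fsB_gen (ms0 ! j0))"
    using nth_map[OF j00, of fsB_gen] by auto
  have len_xs: "length xs = p" "\<forall>i<p. (ws ! i) (xs ! i) \<noteq> 0" using tensor_val_nonzero[OF nz2(3)] lws by auto
  have xsi: "fst (xs ! i) < length (MS i) \<and> snd (xs ! i) \<in> fsA_hom (fib \<phi> (fst E) (int i + 1)) (fsA_gen (MS i ! fst (xs ! i)))"
    if i: "i < p" for i
  proof -
    have ao: "fsA_obj (fib \<phi> (fst E) (int i + 1))" using fib_fsA_obj[OF o ph] i by simp
    have "ws ! i \<in> free_ob fsA_hom (map fsA_gen (MS i)) (fib \<phi> (fst E) (int i + 1))"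
      using submoduleD(1)[OF subi[rule_format, OF i] ao] wsS i by blast
    moreover have "(ws ! i) (fst (xs ! i), snd (xs ! i)) \<noteq> 0" using len_xs(2) i by simp
    ultimately show ?thesis using free_obD by fastforce
  qed
  show ?thesis unfolding good_split_def tau b using ph j0 len_xs(1) xsi by simp
qed

lemma split_tuple_exists:
  assumes o: "fsB_obj E" and v: "good_split E \<tau>"
  shows "\<exists>k<length tuples. \<exists>g. g \<in> fsB_hom E (glued_gens ! k) \<and> split_tuple (tuples ! k) E g = \<tau>"
proof -
  obtain \<phi> j0 f0 xs where tau: "\<tau> = (\<phi>, (j0, f0), xs)" by (cases \<tau>) auto
  have vv: "\<phi> \<in> fsB_hom E (fsB_gen p)" "j0 < length ms0" "f0 \<in> fsB_hom (fibB \<phi> E) (fsB_gen (ms0 ! j0))" "length xs = p"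
    "\<forall>i<p. fst (xs ! i) < length (MS i) \<and> snd (xs ! i) \<in> fsA_hom (fib \<phi> (fst E) (int i + 1)) (fsA_gen (MS i ! fst (xs ! i)))"
    using v by (auto simp: good_split_def tau)
  define J where "J = j0 # map fst xs"
  have J: "J \<in> set tuples" unfolding mem_tuples J_def using vv by auto
  then obtain k where k: "k < length tuples" "tuples ! k = J" by (metis in_set_conv_nth)
  define A where "A = degs J"
  have A: "A 0 = ms0 ! j0" "\<And>i. i < p \<Longrightarrow> A (Suc i) = MS i ! fst (xs ! i)"
    using vv(4) by (auto simp: A_def degs_simps J_def)
  have vr: "glue_data A p E \<phi> f0 (map snd xs)"
    unfolding glue_data_def using vv A by auto
  define g where "g = glue A E \<phi> f0 (map snd xs)"
  have g: "g \<in> fsB_hom E (glued_gens ! k)" using glue_fsB_hom[OF o vr] k by (simp add: g_def glued_gens_simps A_def)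
  have "split_tuple (tuples ! k) E g = \<tau>"
    unfolding k(2) split_tuple_def A_def[symmetric] g_def split_glue[OF o vr] tau
    using vv(4) by (auto simp: J_def intro!: nth_equalityI)
  then show ?thesis using k g by blast
qed

lemma good_split_tuple:
  assumes o: "fsB_obj E" and k: "k < length tuples" and g: "g \<in> fsB_hom E (glued_gens ! k)"
  shows "good_split E (split_tuple (tuples ! k) E g)"
proof -
  define J where "J = tuples ! k"
  have J: "J \<in> set tuples" using k by (simp add: J_def)
  then have Jp: "length J = Suc p" "J ! 0 < length ms0" "\<forall>i<p. J ! Suc i < length (MS i)" using mem_tuples by auto
  have g': "g \<in> fsB_hom E (fsB_gen (block_start (degs J) (Suc p)))" using g k by (simp add: glued_gens_simps J_def)
  have vr: "glue_data (degs J) p E (split_base (degs J) p E g) (split_centre (degs J) p E g) (split_blocks (degs J) p E g)"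
    using glue_data_split[OF o g' degs_pos[OF J]] .
  show ?thesis unfolding J_def[symmetric] split_tuple_def good_split_def
    using vr Jp by (auto simp: glue_data_def degs_simps)
qed

lemma coords_inj:
  assumes o: "fsB_obj E" and t1: "t1 \<in> R_free E" and t2: "t2 \<in> R_free E" and eq: "coords E t1 = coords E t2"
  shows "t1 = t2"
proof (rule ext)
  fix \<tau>
  show "t1 \<tau> = t2 \<tau>"
  proof (cases "good_split E \<tau>")
    case True
    then obtain k g where kg: "k < length tuples" "g \<in> fsB_hom E (glued_gens ! k)" "split_tuple (tuples ! k) E g = \<tau>"
      using split_tuple_exists[OF o] by blast
    have "coords E t1 (k, g) = coords E t2 (k, g)" using eq by simp
    then show ?thesis using kg by (simp add: coords_def)
  next
    case False
    have "t1 \<tau> = 0" using R_free_support[OF o t1, of \<tau>] False by blast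
    moreover have "t2 \<tau> = 0" using R_free_support[OF o t2, of \<tau>] False by blast
    ultimately show ?thesis by simp
  qed
qed

definition term_pullback ::
    "fsB_ob \<Rightarrow> fsB_ob \<Rightarrow> (int \<Rightarrow> int) \<Rightarrow> complex \<times> (int \<Rightarrow> int) \<times> free_vec \<times> free_vec list
      \<Rightarrow> complex \<times> (int \<Rightarrow> int) \<times> free_vec \<times> free_vec list" where
  "term_pullback E' E \<psi> \<tau> = (case \<tau> of (c, \<phi>, s0, ss) \<Rightarrow>
     (c, compose (fst E') \<phi> \<psi>,
      free_mor fsB_hom fsB_comp (map fsB_gen ms0) (fibB (compose (fst E') \<phi> \<psi>) E') (fibB \<phi> E)
         (restrict \<psi> (fib (compose (fst E') \<phi> \<psi>) (fst E') 0)) s0,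
      map (\<lambda>i. free_mor fsA_hom fsA_comp (map fsA_gen (MS i)) (fib (compose (fst E') \<phi> \<psi>) (fst E') (int i + 1))
          (fib \<phi> (fst E) (int i + 1)) (restrict \<psi> (fib (compose (fst E') \<phi> \<psi>) (fst E') (int i + 1))) (ss ! i)) [0..<p]))"

lemma term_vec_split_tuple_pullback:
  assumes o': "fsB_obj E'" and o: "fsB_obj E" and psi: "\<psi> \<in> fsB_hom E' E"
    and vt: "good_free_term E (c, \<phi>, s0, ss)"
    and k: "k < length tuples" and g: "g \<in> fsB_hom E (glued_gens ! k)"
  shows "term_vec (c, \<phi>, s0, ss) (split_tuple (tuples ! k) E g) =
    term_vec (term_pullback E' E \<psi> (c, \<phi>, s0, ss)) (split_tuple (tuples ! k) E' (compose (fst E') g \<psi>))"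
proof -
  define J where "J = tuples ! k"
  define A where "A = degs J"
  define \<chi> where "\<chi> = compose (fst E') \<phi> \<psi>"
  define \<phi>g where "\<phi>g = split_base A p E g"
  define f0g where "f0g = split_centre A p E g"
  define fsg where "fsg = split_blocks A p E g"
  have ph: "\<phi> \<in> fsB_hom E (fsB_gen p)" and lss: "length ss = p"
    using vt by (auto simp: good_term_def free_factors_simps)
  have "good_split E (split_tuple J E g)" using good_split_tuple[OF o k g] by (simp add: J_def)
  then have vg: "\<phi>g \<in> fsB_hom E (fsB_gen p)" "J ! 0 < length ms0" "f0g \<in> fsB_hom (fibB \<phi>g E) (fsB_gen (ms0 ! (J ! 0)))"
    "\<forall>i<p. J ! Suc i < length (MS i) \<and> fsg ! i \<in> fsA_hom (fib \<phi>g (fst E) (int i + 1)) (fsA_gen (MS i ! (J ! Suc i)))"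
    by (auto simp: good_split_def split_tuple_def A_def \<phi>g_def f0g_def fsg_def)
  note dc = split_compose[OF psi, of A p g, folded \<phi>g_def f0g_def fsg_def]
  have d1: "split_tuple J E g = (\<phi>g, (J ! 0, f0g), map (\<lambda>i. (J ! Suc i, fsg ! i)) [0..<p])"
    by (simp add: split_tuple_def A_def \<phi>g_def f0g_def fsg_def)
  have d2: "split_tuple J E' (compose (fst E') g \<psi>) = (compose (fst E') \<phi>g \<psi>,
      (J ! 0, compose (fib (compose (fst E') \<phi>g \<psi>) (fst E') 0) f0g \<psi>),
      map (\<lambda>i. (J ! Suc i, compose (fib (compose (fst E') \<phi>g \<psi>) (fst E') (int i + 1)) (fsg ! i) \<psi>)) [0..<p])"
    unfolding split_tuple_def A_def[symmetric] dc by simp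
  show ?thesis
  proof (cases "\<phi>g = \<phi>")
    case False
    \<comment> \<open>\<open>\<psi>\<close> is surjective, so distinct summands stay distinct after pulling back\<close>
    then have "compose (fst E') \<phi>g \<psi> \<noteq> \<chi>"
      using compose_cancel_surj[OF fsB_homD(2)[OF psi] fsB_hom_extensional[OF vg(1)] fsB_hom_extensional[OF ph]]
      by (auto simp: \<chi>_def)
    then show ?thesis
      unfolding J_def[symmetric] d1 d2 using False by (simp add: term_pullback_def term_vec_apply \<chi>_def)
  next
    case True
    have "tensor_val (map (\<lambda>i. free_mor fsA_hom fsA_comp (map fsA_gen (MS i)) (fib \<chi> (fst E') (int i + 1))
          (fib \<phi> (fst E) (int i + 1)) (restrict \<psi> (fib \<chi> (fst E') (int i + 1))) (ss ! i)) [0..<p])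
          (map (\<lambda>i. (J ! Suc i, compose (fib \<chi> (fst E') (int i + 1)) (fsg ! i) \<psi>)) [0..<p])
        = tensor_val ss (map (\<lambda>i. (J ! Suc i, fsg ! i)) [0..<p])"
      unfolding tensor_val_def \<chi>_def using lss vg(4) True
      by (auto intro!: prod.cong free_mor_restrict_fib[OF psi])
    moreover have "free_mor fsB_hom fsB_comp (map fsB_gen ms0) (fibB \<chi> E') (fibB \<phi> E) (restrict \<psi> (fib \<chi> (fst E') 0)) s0
        (J ! 0, compose (fib \<chi> (fst E') 0) f0g \<psi>) = s0 (J ! 0, f0g)"
      unfolding \<chi>_def by (rule free_mor_restrict_fibB[OF psi]) (use vg(2,3) True in auto)
    ultimately show ?thesis
      unfolding J_def[symmetric] d1 d2 True by (simp add: term_pullback_def term_vec_apply \<chi>_def)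
  qed
qed

lemma term_pullback_vanishes:
  assumes o': "fsB_obj E'" and o: "fsB_obj E" and psi: "\<psi> \<in> fsB_hom E' E"
    and vt: "good_free_term E (c, \<phi>, s0, ss)"
    and k: "k < length tuples" and g': "g' \<in> fsB_hom E' (glued_gens ! k)"
    and nog: "\<not> (\<exists>g. g \<in> fsB_hom E (glued_gens ! k) \<and> compose (fst E') g \<psi> = g')"
  shows "term_vec (term_pullback E' E \<psi> (c, \<phi>, s0, ss)) (split_tuple (tuples ! k) E' g') = 0"
proof (rule ccontr)
  assume nz: "term_vec (term_pullback E' E \<psi> (c, \<phi>, s0, ss)) (split_tuple (tuples ! k) E' g') \<noteq> 0"
  define J where "J = tuples ! k"
  define A where "A = degs J"
  define \<chi> where "\<chi> = compose (fst E') \<phi> \<psi>"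
  define \<chi>' where "\<chi>' = split_base A p E' g'"
  define f0' where "f0' = split_centre A p E' g'"
  define fs' where "fs' = split_blocks A p E' g'"
  have ph: "\<phi> \<in> fsB_hom E (fsB_gen p)" using vt by (auto simp: good_term_def free_factors_simps)
  have "J \<in> set tuples" using k by (simp add: J_def)
  then have Jp: "J ! 0 < length ms0" "\<forall>i<p. J ! Suc i < length (MS i)" using mem_tuples by auto
  have Gk: "glued_gens ! k = fsB_gen (block_start A (Suc p))" using k by (simp add: glued_gens_simps A_def J_def)
  from nz have nz': "\<chi>' = \<chi>"
    "free_mor fsB_hom fsB_comp (map fsB_gen ms0) (fibB \<chi> E') (fibB \<phi> E) (restrict \<psi> (fib \<chi> (fst E') 0)) s0 (J ! 0, f0') \<noteq> 0"
    "tensor_val (map (\<lambda>i. free_mor fsA_hom fsA_comp (map fsA_gen (MS i)) (fib \<chi> (fst E') (int i + 1))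
          (fib \<phi> (fst E) (int i + 1)) (restrict \<psi> (fib \<chi> (fst E') (int i + 1))) (ss ! i)) [0..<p])
        (map (\<lambda>i. (J ! Suc i, fs' ! i)) [0..<p]) \<noteq> 0"
    unfolding J_def[symmetric] by (auto simp: split_tuple_def term_pullback_def term_vec_apply
        A_def \<chi>_def \<chi>'_def f0'_def fs'_def split: if_splits)
  \<comment> \<open>each component of \<open>g'\<close> factors through \<open>\<psi>\<close>; glue the factorisations\<close>
  obtain f0 where f0: "f0 \<in> fsB_hom (fibB \<phi> E) (fsB_gen (ms0 ! (J ! 0)))" "compose (fib \<chi> (fst E') 0) f0 \<psi> = f0'"
    using free_mor_restrict_fibB_nonzero[OF nz'(2)] by auto
  have "\<exists>fi. fi \<in> fsA_hom (fib \<phi> (fst E) (int i + 1)) (fsA_gen (MS i ! (J ! Suc i))) \<and>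
        compose (fib \<chi> (fst E') (int i + 1)) fi \<psi> = fs' ! i" if i: "i < p" for i
  proof -
    have "free_mor fsA_hom fsA_comp (map fsA_gen (MS i)) (fib \<chi> (fst E') (int i + 1)) (fib \<phi> (fst E) (int i + 1))
        (restrict \<psi> (fib \<chi> (fst E') (int i + 1))) (ss ! i) (J ! Suc i, fs' ! i) \<noteq> 0"
      using tensor_val_nonzero[OF nz'(3)] i by simp
    from free_mor_restrict_fib_nonzero[OF this] show ?thesis using i Jp(2) by auto
  qed
  then obtain F where F: "\<And>i. i < p \<Longrightarrow> F i \<in> fsA_hom (fib \<phi> (fst E) (int i + 1)) (fsA_gen (MS i ! (J ! Suc i))) \<and>
        compose (fib \<chi> (fst E') (int i + 1)) (F i) \<psi> = fs' ! i"
    by metis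
  define fs where "fs = map F [0..<p]"
  have fs: "length fs = p" "\<forall>i<p. fs ! i \<in> fsA_hom (fib \<phi> (fst E) (int i + 1)) (fsA_gen (MS i ! (J ! Suc i))) \<and>
        compose (fib \<chi> (fst E') (int i + 1)) (fs ! i) \<psi> = fs' ! i"
    using F by (simp_all add: fs_def)
  have vr: "glue_data A p E \<phi> f0 fs"
    unfolding glue_data_def using ph f0(1) Jp fs by (simp add: A_def degs_simps)
  define g where "g = glue A E \<phi> f0 fs"
  have gh: "g \<in> fsB_hom E (glued_gens ! k)" using glue_fsB_hom[OF o vr] Gk by (simp add: g_def)
  have "compose (fst E') g \<psi> = g'"
    unfolding g_def using nz'(1) f0(2) fs(2)
    by (intro compose_glue_eq[OF o' o psi vr]) (auto simp: Gk[symmetric] g' \<chi>_def \<chi>'_def f0'_def fs'_def)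
  then show False using nog gh by blast
qed

lemma F_mor_apply_compose:
  assumes psi: "\<psi> \<in> fsB_hom E' E" and k: "k < length tuples" and g: "g \<in> fsB_hom E (glued_gens ! k)"
  shows "F_mor E' E \<psi> u (k, compose (fst E') g \<psi>) = u (k, g)"
proof -
  have "F_mor E' E \<psi> u (k, fsB_comp E' g \<psi>) = u (k, g)"
    unfolding F_mor_def
  proof (rule free_mor_unique_preimage)
    show "k < length glued_gens" using k by (simp add: glued_gens_simps)
    show "g \<in> fsB_hom E (glued_gens ! k)" by (rule g)
    fix f2 assume "f2 \<in> fsB_hom E (glued_gens ! k)" "fsB_comp E' f2 \<psi> = fsB_comp E' g \<psi>"
    then show "f2 = g" using compose_cancel_surj[OF fsB_homD(2)[OF psi] fsB_hom_extensional fsB_hom_extensional[OF g]]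
      by (auto simp: fsB_comp_def)
  qed
  then show ?thesis by (simp add: fsB_comp_def)
qed

lemma F_mor_coords_term_vec:
  assumes o': "fsB_obj E'" and o: "fsB_obj E" and psi: "\<psi> \<in> fsB_hom E' E"
    and vt: "good_free_term E \<tau>"
  shows "F_mor E' E \<psi> (coords E (term_vec \<tau>)) = coords E' (term_vec (term_pullback E' E \<psi> \<tau>))"
proof (rule ext)
  obtain c \<phi> s0 ss where tau: "\<tau> = (c, \<phi>, s0, ss)" by (cases \<tau>) auto
  fix z :: "nat \<times> (int \<Rightarrow> int)"
  obtain k g' where z: "z = (k, g')" by (cases z) auto
  show "F_mor E' E \<psi> (coords E (term_vec \<tau>)) z = coords E' (term_vec (term_pullback E' E \<psi> \<tau>)) z"
  proof (cases "k < length tuples")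
    case False
    then show ?thesis unfolding z F_mor_def free_mor_def coords_def by (simp add: glued_gens_simps)
  next
    case k: True
    \<comment> \<open>either the generator \<open>g'\<close> factors through \<open>\<psi>\<close>, uniquely since \<open>\<psi>\<close> is onto, or both sides vanish\<close>
    show ?thesis
    proof (cases "\<exists>g. g \<in> fsB_hom E (glued_gens ! k) \<and> compose (fst E') g \<psi> = g'")
      case True
      then obtain g where g: "g \<in> fsB_hom E (glued_gens ! k)" "compose (fst E') g \<psi> = g'" by blast
      have g'h: "g' \<in> fsB_hom E' (glued_gens ! k)" using fsB_hom_compose[OF o' psi g(1)] g(2) by simp
      have "F_mor E' E \<psi> (coords E (term_vec \<tau>)) z = term_vec \<tau> (split_tuple (tuples ! k) E g)"
        using F_mor_apply_compose[OF psi k g(1)] g k by (simp add: z coords_def)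
      also have "\<dots> = term_vec (term_pullback E' E \<psi> \<tau>) (split_tuple (tuples ! k) E' (compose (fst E') g \<psi>))"
        unfolding tau by (rule term_vec_split_tuple_pullback[OF o' o psi vt[unfolded tau] k g(1)])
      also have "\<dots> = coords E' (term_vec (term_pullback E' E \<psi> \<tau>)) z"
        using g(2) g'h k by (simp add: z coords_def)
      finally show ?thesis .
    next
      case False
      have "F_mor E' E \<psi> (coords E (term_vec \<tau>)) (k, g') = 0" unfolding F_mor_def
        by (rule free_mor_no_preimage) (use False in \<open>auto simp: fsB_comp_def\<close>)
      moreover have "coords E' (term_vec (term_pullback E' E \<psi> \<tau>)) (k, g') = 0"
        using term_pullback_vanishes[OF o' o psi vt[unfolded tau] k _ False] k by (auto simp: coords_def tau)
      ultimately show ?thesis by (simp add: z)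
    qed
  qed
qed

lemma coords_terms_sum: "coords E (terms_sum L) = (\<lambda>z. \<Sum>\<tau>\<leftarrow>L. coords E (term_vec \<tau>) z)"
  by (rule ext) (auto simp: coords_def terms_sum_def)

lemma F_mor_coords_terms_sum:
  assumes o': "fsB_obj E'" and o: "fsB_obj E" and psi: "\<psi> \<in> fsB_hom E' E"
    and vt: "\<forall>\<tau>\<in>set L. good_free_term E \<tau>"
  shows "F_mor E' E \<psi> (coords E (terms_sum L)) = coords E' (terms_sum (map (term_pullback E' E \<psi>) L))"
proof -
  have "F_mor E' E \<psi> (coords E (terms_sum L)) = (\<lambda>z. \<Sum>\<tau>\<leftarrow>L. F_mor E' E \<psi> (coords E (term_vec \<tau>)) z)"
    unfolding coords_terms_sum F_mor_def by (rule free_mor_sum_list)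
  also have "\<dots> = (\<lambda>z. \<Sum>\<tau>\<leftarrow>L. coords E' (term_vec (term_pullback E' E \<psi> \<tau>)) z)"
    by (rule ext, rule sum_list_map_cong) (simp add: F_mor_coords_term_vec[OF o' o psi] vt)
  also have "\<dots> = coords E' (terms_sum (map (term_pullback E' E \<psi>) L))"
    unfolding coords_terms_sum by (simp add: o_def)
  finally show ?thesis .
qed

lemma good_term_pullback:
  assumes o': "fsB_obj E'" and o: "fsB_obj E" and psi: "\<psi> \<in> fsB_hom E' E"
    and vt: "good_free_term E \<tau>"
  shows "good_free_term E' (term_pullback E' E \<psi> \<tau>)"
proof -
  obtain c \<phi> s0 ss where tau: "\<tau> = (c, \<phi>, s0, ss)" by (cases \<tau>) auto
  have v: "\<phi> \<in> fsB_hom E (fsB_gen p)" "s0 \<in> S0 (fibB \<phi> E)" "length ss = p"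
    "\<forall>i<p. ss ! i \<in> SS i (fib \<phi> (fst E) (int i + 1))"
    using vt by (auto simp: good_term_def tau free_factors_simps)
  define \<chi> where "\<chi> = compose (fst E') \<phi> \<psi>"
  have ch: "\<chi> \<in> fsB_hom E' (fsB_gen p)" unfolding \<chi>_def by (rule fsB_hom_compose[OF o' psi v(1)])
  have s0': "free_mor fsB_hom fsB_comp (map fsB_gen ms0) (fibB \<chi> E') (fibB \<phi> E) (restrict \<psi> (fib \<chi> (fst E') 0)) s0 \<in> S0 (fibB \<chi> E')"
    by (rule submoduleD(2)[OF sub0 fibB_obj[OF o' ch] fibB_obj[OF o v(1)] fsB_hom_restrict_fib[OF o' psi v(1), folded \<chi>_def] v(2)])
  have ss': "free_mor fsA_hom fsA_comp (map fsA_gen (MS i)) (fib \<chi> (fst E') (int i + 1))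
          (fib \<phi> (fst E) (int i + 1)) (restrict \<psi> (fib \<chi> (fst E') (int i + 1))) (ss ! i) \<in> SS i (fib \<chi> (fst E') (int i + 1))"
    if i: "i < p" for i
    by (rule submoduleD(2)[OF subi[rule_format, OF i] fib_fsA_obj[OF o' ch] fib_fsA_obj[OF o v(1)] fsA_hom_restrict_fib[OF psi, of \<phi>, folded \<chi>_def]])
       (use i v(4) in auto)
  show ?thesis using ch s0' ss' unfolding tau term_pullback_def good_term_def \<chi>_def
    by (simp add: free_factors_simps)
qed

lemma coords_add: "coords E (\<lambda>a. t1 a + (t2 a::complex)) = (\<lambda>a. coords E t1 a + coords E t2 a)"
  by (rule ext) (auto simp: coords_def)
lemma coords_scale: "coords E (\<lambda>a. (c::complex) * t1 a) = (\<lambda>a. c * coords E t1 a)"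
  by (rule ext) (auto simp: coords_def)
lemma coords_zero: "coords E (\<lambda>a. 0::complex) = (\<lambda>a. 0)"
  by (rule ext) (auto simp: coords_def)

lemma R_free_subspace: "fn_subspace (R_free E)"
  unfolding R_free_def by (rule R_ob_subspace)

lemma R_coords_subspace: "fn_subspace (R_coords E)"
  unfolding fn_subspace_def R_coords_def
proof (intro conjI ballI allI)
  have "coords E (\<lambda>a. 0) \<in> coords E ` R_free E" using fn_subspace_zero[OF R_free_subspace] by (rule imageI)
  then show "(\<lambda>_. 0) \<in> coords E ` R_free E" unfolding coords_zero .
next
  fix x y assume "x \<in> coords E ` R_free E" "y \<in> coords E ` R_free E"
  then obtain t1 t2 where t: "t1 \<in> R_free E" "t2 \<in> R_free E" "x = coords E t1" "y = coords E t2" by blast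
  have "coords E (\<lambda>a. t1 a + t2 a) \<in> coords E ` R_free E" using fn_subspace_add[OF R_free_subspace t(1,2)] by (rule imageI)
  then show "(\<lambda>a. x a + y a) \<in> coords E ` R_free E" unfolding coords_add t(3,4) .
next
  fix c x assume "x \<in> coords E ` R_free E"
  then obtain t1 where t: "t1 \<in> R_free E" "x = coords E t1" by blast
  have "coords E (\<lambda>a. c * t1 a) \<in> coords E ` R_free E" using fn_subspace_scale[OF R_free_subspace t(1)] by (rule imageI)
  then show "(\<lambda>a. c * x a) \<in> coords E ` R_free E" unfolding coords_scale t(2) .
qed

lemma R_coords_subset_free: "R_coords E \<subseteq> free_ob fsB_hom glued_gens E"
proof
  fix u assume "u \<in> R_coords E"
  then obtain t where u: "u = coords E t" by (auto simp: R_coords_def)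
  show "u \<in> free_ob fsB_hom glued_gens E"
    unfolding free_ob_def
  proof (intro CollectI allI impI)
    fix i f assume "u (i, f) \<noteq> 0"
    then have "i < length tuples \<and> f \<in> fsB_hom E (glued_gens ! i)" unfolding u coords_def by (simp split: if_splits)
    then show "i < length glued_gens \<and> f \<in> fsB_hom E (glued_gens ! i)" by (simp add: glued_gens_simps(1))
  qed
qed

lemma R_free_terms_sum:
  assumes o: "fsB_obj E" and t: "t \<in> R_free E"
  shows "\<exists>L. (\<forall>\<tau>\<in>set L. good_free_term E \<tau>) \<and> t = terms_sum L"
  using R_ob_terms_sum[OF fsB_objD(1)[OF o] t[unfolded R_free_def]] .

lemma terms_sum_in_R_free:
  assumes "\<forall>\<tau>\<in>set L. good_free_term E \<tau>"
  shows "terms_sum L \<in> R_free E"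
  unfolding R_free_def by (rule terms_sum_in_R_ob[OF assms])

lemma F_mor_R_coords:
  assumes oX: "fsB_obj X" and oY: "fsB_obj Y" and f: "f \<in> fsB_hom X Y" and u: "u \<in> R_coords Y"
  shows "F_mor X Y f u \<in> R_coords X"
proof -
  obtain t where t: "t \<in> R_free Y" "u = coords Y t" using u by (auto simp: R_coords_def)
  obtain L where L: "\<forall>\<tau>\<in>set L. good_free_term Y \<tau>" "t = terms_sum L"
    using R_free_terms_sum[OF oY t(1)] by blast
  have "F_mor X Y f u = coords X (terms_sum (map (term_pullback X Y f) L))"
    unfolding t(2) L(2) by (rule F_mor_coords_terms_sum[OF oX oY f L(1)])
  moreover have "terms_sum (map (term_pullback X Y f) L) \<in> R_free X"
    by (rule terms_sum_in_R_free) (use L(1) good_term_pullback[OF oX oY f] in auto)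
  ultimately show ?thesis by (simp add: R_coords_def)
qed

theorem R_coords_submodule: "is_submodule fsB_obj fsB_hom (free_ob fsB_hom glued_gens) F_mor R_coords"
proof -
  have 1: "\<forall>X. fsB_obj X \<longrightarrow> fn_subspace (R_coords X) \<and> R_coords X \<subseteq> free_ob fsB_hom glued_gens X"
    using R_coords_subspace R_coords_subset_free by blast
  have 2: "\<forall>X Y f. fsB_obj X \<longrightarrow> fsB_obj Y \<longrightarrow> f \<in> fsB_hom X Y \<longrightarrow> F_mor X Y f ` R_coords Y \<subseteq> R_coords X"
    using F_mor_R_coords by blast
  show ?thesis unfolding is_submodule_def using 1 2 by blast
qed

lemma good_term_length: "good_term V0 Vs (length free_factors) E \<tau> = good_term V0 Vs p E \<tau>"
  by (simp add: free_factors_simps)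

lemma fibre_epis_linear:
  assumes o: "fsB_obj E"
  shows "\<forall>\<phi>\<in>fsB_hom E (fsB_gen p). fn_linear_on (S0 (fibB \<phi> E)) (Nob (fibB \<phi> E)) (e0 (fibB \<phi> E)) \<and> fn_subspace (S0 (fibB \<phi> E)) \<and>
       (\<forall>i<p. fn_linear_on (fst (free_factors ! i) (fib \<phi> (fst E) (int i + 1))) (fst (Ms ! i) (fib \<phi> (fst E) (int i + 1))) (ET i (fib \<phi> (fst E) (int i + 1)))
            \<and> fn_subspace (fst (free_factors ! i) (fib \<phi> (fst E) (int i + 1))))"
proof (intro ballI conjI allI impI)
  fix \<phi> assume ph: "\<phi> \<in> fsB_hom E (fsB_gen p)"
  have fo: "fsB_obj (fibB \<phi> E)" using fibB_obj[OF o ph] .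
  show "fn_linear_on (S0 (fibB \<phi> E)) (Nob (fibB \<phi> E)) (e0 (fibB \<phi> E))" using epiD(1)[OF epi0 fo] by blast
  show "fn_subspace (S0 (fibB \<phi> E))" using submoduleD(1)[OF sub0 fo] by blast
  fix i assume i: "i < p"
  have ao: "fsA_obj (fib \<phi> (fst E) (int i + 1))" using fib_fsA_obj[OF o ph] i by simp
  show "fn_linear_on (fst (free_factors ! i) (fib \<phi> (fst E) (int i + 1))) (fst (Ms ! i) (fib \<phi> (fst E) (int i + 1))) (ET i (fib \<phi> (fst E) (int i + 1)))"
    using epiD(1)[OF epii[rule_format, OF i] ao] i by (simp add: free_factors_simps)
  show "fn_subspace (fst (free_factors ! i) (fib \<phi> (fst E) (int i + 1)))"
    using submoduleD(1)[OF subi[rule_format, OF i] ao] i by (simp add: free_factors_simps)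
qed

lemma tensor_map_R_free:
  assumes o: "fsB_obj E" and L: "\<forall>\<tau>\<in>set L. good_free_term E \<tau>"
  shows "tensor_map e0 ET p E (terms_sum L) = terms_sum (map (term_map e0 ET p E) L)"
  by (rule tensor_map_terms_sum[OF _ fibre_epis_linear[OF o]]) (use L in \<open>simp add: good_term_length\<close>)

lemma good_term_map:
  assumes o: "fsB_obj E" and vt: "good_free_term E \<tau>"
  shows "good_R_term E (term_map e0 ET p E \<tau>)"
proof -
  obtain c \<phi> s0 ss where tau: "\<tau> = (c, \<phi>, s0, ss)" by (cases \<tau>) auto
  have v: "\<phi> \<in> fsB_hom E (fsB_gen p)" "s0 \<in> S0 (fibB \<phi> E)" "length ss = p"
    "\<forall>i<p. ss ! i \<in> fst (free_factors ! i) (fib \<phi> (fst E) (int i + 1))"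
    using vt by (auto simp: good_term_def tau free_factors_simps)
  note lc = fibre_epis_linear[OF o, rule_format, OF v(1)]
  have "e0 (fibB \<phi> E) s0 \<in> Nob (fibB \<phi> E)" using fn_linear_on_in lc v(2) by blast
  moreover have "\<forall>i<p. ET i (fib \<phi> (fst E) (int i + 1)) (ss ! i) \<in> fst (Ms ! i) (fib \<phi> (fst E) (int i + 1))"
    using fn_linear_on_in lc v(4) by blast
  ultimately show ?thesis using v(1) by (simp add: good_term_def tau term_map_def)
qed

lemma inj_on_coords: "fsB_obj E \<Longrightarrow> inj_on (coords E) (R_free E)"
  using coords_inj by (auto simp: inj_on_def)

lemma eta_coords:
  assumes o: "fsB_obj E" and t: "t \<in> R_free E"
  shows "eta E (coords E t) = tensor_map e0 ET p E t"
  unfolding eta_def using inv_into_f_f[OF inj_on_coords[OF o] t] by simp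

lemma tensor_map_in_R_ob:
  assumes o: "fsB_obj E" and t: "t \<in> R_free E"
  shows "tensor_map e0 ET p E t \<in> R_ob Nob Ms E"
proof -
  obtain L where L: "\<forall>\<tau>\<in>set L. good_free_term E \<tau>" "t = terms_sum L"
    using R_free_terms_sum[OF o t] by blast
  show ?thesis unfolding L(2) tensor_map_R_free[OF o L(1)]
    by (rule terms_sum_in_R_ob) (use L(1) good_term_map[OF o] in auto)
qed

lemma term_map_scale: "map (term_map e0 ET p E) (map (\<lambda>(c, \<phi>, v, ws). (k * c, \<phi>, v, ws)) L) =
   map (\<lambda>(c, \<phi>, v, ws). (k * c, \<phi>, v, ws)) (map (term_map e0 ET p E) L)"
  by (auto simp: term_map_def split: prod.splits)

lemma tensor_map_add:
  assumes o: "fsB_obj E" and t1: "t1 \<in> R_free E" and t2: "t2 \<in> R_free E"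
  shows "tensor_map e0 ET p E (\<lambda>a. t1 a + t2 a) = (\<lambda>a. tensor_map e0 ET p E t1 a + tensor_map e0 ET p E t2 a)"
proof -
  obtain L1 where L1: "\<forall>\<tau>\<in>set L1. good_free_term E \<tau>" "t1 = terms_sum L1"
    using R_free_terms_sum[OF o t1] by blast
  obtain L2 where L2: "\<forall>\<tau>\<in>set L2. good_free_term E \<tau>" "t2 = terms_sum L2"
    using R_free_terms_sum[OF o t2] by blast
  have e: "(\<lambda>a. t1 a + t2 a) = terms_sum (L1 @ L2)" unfolding L1(2) L2(2) terms_sum_append ..
  have v: "\<forall>\<tau>\<in>set (L1 @ L2). good_free_term E \<tau>" using L1(1) L2(1) by auto
  show ?thesis unfolding e tensor_map_R_free[OF o v] unfolding L1(2) L2(2) tensor_map_R_free[OF o L1(1)] tensor_map_R_free[OF o L2(1)]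
    by (simp add: terms_sum_append)
qed

lemma tensor_map_scale:
  assumes o: "fsB_obj E" and t1: "t1 \<in> R_free E"
  shows "tensor_map e0 ET p E (\<lambda>a. k * t1 a) = (\<lambda>a. k * tensor_map e0 ET p E t1 a)"
proof -
  obtain L1 where L1: "\<forall>\<tau>\<in>set L1. good_free_term E \<tau>" "t1 = terms_sum L1"
    using R_free_terms_sum[OF o t1] by blast
  have v: "\<forall>\<tau>\<in>set (map (\<lambda>(c, \<phi>, v, ws). (k * c, \<phi>, v, ws)) L1). good_free_term E \<tau>"
    using L1(1) by (auto simp: good_term_def)
  show ?thesis unfolding L1(2) terms_sum_scale tensor_map_R_free[OF o v] tensor_map_R_free[OF o L1(1)] term_map_scale ..
qed

lemma eta_linear:
  assumes o: "fsB_obj E"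
  shows "fn_linear_on (R_coords E) (R_ob Nob Ms E) (eta E)"
  unfolding fn_linear_on_def
proof (intro conjI ballI allI)
  fix u assume "u \<in> R_coords E"
  then obtain t where t: "t \<in> R_free E" "u = coords E t" by (auto simp: R_coords_def)
  show "eta E u \<in> R_ob Nob Ms E" unfolding t(2) eta_coords[OF o t(1)] by (rule tensor_map_in_R_ob[OF o t(1)])
next
  fix x y assume "x \<in> R_coords E" "y \<in> R_coords E"
  then obtain t1 t2 where t: "t1 \<in> R_free E" "x = coords E t1" "t2 \<in> R_free E" "y = coords E t2" by (auto simp: R_coords_def)
  have s: "(\<lambda>a. t1 a + t2 a) \<in> R_free E" using fn_subspace_add[OF R_free_subspace t(1,3)] .
  show "eta E (\<lambda>a. x a + y a) = (\<lambda>a. eta E x a + eta E y a)"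
    unfolding t(2,4) coords_add[symmetric] eta_coords[OF o s] eta_coords[OF o t(1)] eta_coords[OF o t(3)]
    by (rule tensor_map_add[OF o t(1,3)])
next
  fix c x assume "x \<in> R_coords E"
  then obtain t1 where t: "t1 \<in> R_free E" "x = coords E t1" by (auto simp: R_coords_def)
  have s: "(\<lambda>a. c * t1 a) \<in> R_free E" using fn_subspace_scale[OF R_free_subspace t(1)] .
  show "eta E (\<lambda>a. c * x a) = (\<lambda>a. c * eta E x a)"
    unfolding t(2) coords_scale[symmetric] eta_coords[OF o s] eta_coords[OF o t(1)]
    by (rule tensor_map_scale[OF o t(1)])
qed

lemma term_map_lift:
  assumes o: "fsB_obj E" and L: "\<forall>\<tau>\<in>set L. good_R_term E \<tau>"
  shows "\<exists>L'. (\<forall>\<tau>\<in>set L'. good_free_term E \<tau>) \<and> map (term_map e0 ET p E) L' = L"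
  using L
proof (induction L)
  case Nil
  then show ?case by simp
next
  case (Cons \<tau> L)
  obtain L' where L': "\<forall>\<tau>\<in>set L'. good_free_term E \<tau>" "map (term_map e0 ET p E) L' = L"
    using Cons by auto
  obtain c \<phi> v ws where tau: "\<tau> = (c, \<phi>, v, ws)" by (cases \<tau>) auto
  have vt: "\<phi> \<in> fsB_hom E (fsB_gen p)" "v \<in> Nob (fibB \<phi> E)" "length ws = p"
    "\<forall>i<p. ws ! i \<in> fst (Ms ! i) (fib \<phi> (fst E) (int i + 1))"
    using Cons.prems by (auto simp: good_term_def tau)
  have fo: "fsB_obj (fibB \<phi> E)" using fibB_obj[OF o vt(1)] .
  obtain s0 where s0: "s0 \<in> S0 (fibB \<phi> E)" "e0 (fibB \<phi> E) s0 = v"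
    using epiD(1)[OF epi0 fo] vt(2) by (metis imageE)
  have exi: "\<exists>s. s \<in> SS i (fib \<phi> (fst E) (int i + 1)) \<and> ET i (fib \<phi> (fst E) (int i + 1)) s = ws ! i" if i: "i < p" for i
  proof -
    have ao: "fsA_obj (fib \<phi> (fst E) (int i + 1))" using fib_fsA_obj[OF o vt(1)] i by simp
    have "ET i (fib \<phi> (fst E) (int i + 1)) ` SS i (fib \<phi> (fst E) (int i + 1)) = fst (Ms ! i) (fib \<phi> (fst E) (int i + 1))"
      using epiD(1)[OF epii[rule_format, OF i] ao] by blast
    then show ?thesis using vt(4) i by (metis imageE)
  qed
  define ss where "ss = map (\<lambda>i. SOME s. s \<in> SS i (fib \<phi> (fst E) (int i + 1)) \<and> ET i (fib \<phi> (fst E) (int i + 1)) s = ws ! i) [0..<p]"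
  have ssp: "ss ! i \<in> SS i (fib \<phi> (fst E) (int i + 1)) \<and> ET i (fib \<phi> (fst E) (int i + 1)) (ss ! i) = ws ! i" if i: "i < p" for i
    using someI_ex[OF exi[OF i]] i by (simp add: ss_def)
  have v1: "good_free_term E (c, \<phi>, s0, ss)"
    using vt(1) s0(1) ssp by (simp add: good_term_def free_factors_simps ss_def)
  have "term_map e0 ET p E (c, \<phi>, s0, ss) = \<tau>"
    using s0(2) ssp vt(3) by (auto simp: term_map_def tau intro!: nth_equalityI)
  then show ?case using L' v1 by (intro exI[of _ "(c, \<phi>, s0, ss) # L'"]) auto
qed

lemma eta_surj:
  assumes o: "fsB_obj E"
  shows "eta E ` R_coords E = R_ob Nob Ms E"
proof
  show "eta E ` R_coords E \<subseteq> R_ob Nob Ms E" using eta_linear[OF o] by (auto simp: fn_linear_on_def)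
next
  show "R_ob Nob Ms E \<subseteq> eta E ` R_coords E"
  proof
    fix r assume r: "r \<in> R_ob Nob Ms E"
    obtain L where L: "\<forall>\<tau>\<in>set L. good_R_term E \<tau>" "r = terms_sum L"
      using R_ob_terms_sum[OF fsB_objD(1)[OF o] r] by blast
    obtain L' where L': "\<forall>\<tau>\<in>set L'. good_free_term E \<tau>" "map (term_map e0 ET p E) L' = L"
      using term_map_lift[OF o L(1)] by blast
    have t: "terms_sum L' \<in> R_free E" by (rule terms_sum_in_R_free[OF L'(1)])
    have "eta E (coords E (terms_sum L')) = r"
      unfolding eta_coords[OF o t] tensor_map_R_free[OF o L'(1)] L'(2) L(2) ..
    moreover have "coords E (terms_sum L') \<in> R_coords E" using t by (simp add: R_coords_def)
    ultimately show "r \<in> eta E ` R_coords E" by (metis imageI)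
  qed
qed

definition term_push ::
    "fsB_ob \<Rightarrow> fsB_ob \<Rightarrow> (int \<Rightarrow> int) \<Rightarrow> complex \<times> (int \<Rightarrow> int) \<times> ('b \<Rightarrow> complex) \<times> ('a \<Rightarrow> complex) list
      \<Rightarrow> complex \<times> (int \<Rightarrow> int) \<times> ('b \<Rightarrow> complex) \<times> ('a \<Rightarrow> complex) list" where
  "term_push E' E \<psi> \<tau> = (case \<tau> of (c, \<phi>, v, ws) \<Rightarrow>
     (c, compose (fst E') \<phi> \<psi>,
      Nmor (fibB (compose (fst E') \<phi> \<psi>) E') (fibB \<phi> E) (restrict \<psi> (fib (compose (fst E') \<phi> \<psi>) (fst E') 0)) v,
      map (\<lambda>i. snd (Ms ! i) (fib (compose (fst E') \<phi> \<psi>) (fst E') (int i + 1)) (fib \<phi> (fst E) (int i + 1))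
         (restrict \<psi> (fib (compose (fst E') \<phi> \<psi>) (fst E') (int i + 1))) (ws ! i)) [0..<length Ms]))"

lemma Rmor_terms_sum:
  assumes o': "fsB_obj E'" and o: "fsB_obj E" and psi: "\<psi> \<in> fsB_hom E' E"
    and L: "\<forall>\<tau>\<in>set L. good_R_term E \<tau>"
  shows "Rmor E' E \<psi> (terms_sum L) = terms_sum (map (term_push E' E \<psi>) L)"
proof -
  note rs = Rspec[unfolded R_mor_spec_def, rule_format, OF o' o psi]
  have lin: "fn_linear_on (R_ob Nob Ms E) (R_ob Nob Ms E') (Rmor E' E \<psi>)" using rs by blast
  define U where "U = (\<lambda>\<tau>::complex \<times> (int \<Rightarrow> int) \<times> ('b \<Rightarrow> complex) \<times> ('a \<Rightarrow> complex) list.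
     summand_inj (fst (snd \<tau>)) (elem_tensor (fst (snd (snd \<tau>))) (snd (snd (snd \<tau>)))))"
  have tv: "term_vec \<tau> = (\<lambda>z. fst \<tau> * U \<tau> z)" for \<tau>
    by (cases \<tau>) (simp add: term_vec_def U_def)
  have Uin: "U \<tau> \<in> R_ob Nob Ms E" if "\<tau> \<in> set L" for \<tau>
  proof -
    obtain c \<phi> v ws where tau: "\<tau> = (c, \<phi>, v, ws)" by (cases \<tau>) auto
    have "good_R_term E \<tau>" using L that by blast
    then have "good_R_term E (1, \<phi>, v, ws)" by (simp add: good_term_def tau)
    from term_vec_in_R_ob[OF this] show ?thesis by (simp add: term_vec_def U_def tau)
  qed
  have e1: "terms_sum L = (\<lambda>z. \<Sum>\<tau>\<leftarrow>L. fst \<tau> * U \<tau> z)" by (simp add: terms_sum_def tv)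
  have "Rmor E' E \<psi> (terms_sum L) = (\<lambda>z. \<Sum>\<tau>\<leftarrow>L. fst \<tau> * Rmor E' E \<psi> (U \<tau>) z)"
    unfolding e1 by (rule conjunct2[OF fn_linear_on_sum_list[OF lin R_ob_subspace]]) (use Uin in blast)
  also have "\<dots> = terms_sum (map (term_push E' E \<psi>) L)"
    unfolding terms_sum_def map_map o_def
  proof (rule ext, rule sum_list_map_cong)
    fix z \<tau> assume t: "\<tau> \<in> set L"
    obtain c \<phi> v ws where tau: "\<tau> = (c, \<phi>, v, ws)" by (cases \<tau>) auto
    have vt: "\<phi> \<in> fsB_hom E (fsB_gen (length Ms))" "v \<in> Nob (fibB \<phi> E)" "length ws = length Ms"
      "\<forall>i<length Ms. ws ! i \<in> fst (Ms ! i) (fib \<phi> (fst E) (int i + 1))"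
      using L t tau by (auto simp: good_term_def)
    have R: "Rmor E' E \<psi> (summand_inj \<phi> (elem_tensor v ws)) =
       summand_inj (compose (fst E') \<phi> \<psi>) (elem_tensor
              (Nmor (fibB (compose (fst E') \<phi> \<psi>) E') (fibB \<phi> E) (restrict \<psi> (fib (compose (fst E') \<phi> \<psi>) (fst E') 0)) v)
              (map (\<lambda>i. snd (Ms ! i) (fib (compose (fst E') \<phi> \<psi>) (fst E') (int i + 1)) (fib \<phi> (fst E) (int i + 1))
                          (restrict \<psi> (fib (compose (fst E') \<phi> \<psi>) (fst E') (int i + 1))) (ws ! i))
                   [0..<length Ms]))"
      using rs vt by (simp add: Let_def)
    show "fst \<tau> * Rmor E' E \<psi> (U \<tau>) z = term_vec (term_push E' E \<psi> \<tau>) z"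
      unfolding tau using R by (simp add: U_def term_vec_def term_push_def)
  qed
  finally show ?thesis .
qed

lemma term_map_pullback:
  assumes o': "fsB_obj E'" and o: "fsB_obj E" and psi: "\<psi> \<in> fsB_hom E' E"
    and vt: "good_free_term E \<tau>"
  shows "term_map e0 ET p E' (term_pullback E' E \<psi> \<tau>) = term_push E' E \<psi> (term_map e0 ET p E \<tau>)"
proof -
  obtain c \<phi> s0 ss where tau: "\<tau> = (c, \<phi>, s0, ss)" by (cases \<tau>) auto
  have v: "\<phi> \<in> fsB_hom E (fsB_gen p)" "s0 \<in> S0 (fibB \<phi> E)" "length ss = p"
    "\<forall>i<p. ss ! i \<in> SS i (fib \<phi> (fst E) (int i + 1))"
    using vt by (auto simp: good_term_def tau free_factors_simps)
  define \<chi> where "\<chi> = compose (fst E') \<phi> \<psi>"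
  have ch: "\<chi> \<in> fsB_hom E' (fsB_gen p)" unfolding \<chi>_def by (rule fsB_hom_compose[OF o' psi v(1)])
  have n0: "e0 (fibB \<chi> E') (free_mor fsB_hom fsB_comp (map fsB_gen ms0) (fibB \<chi> E') (fibB \<phi> E) (restrict \<psi> (fib \<chi> (fst E') 0)) s0)
     = Nmor (fibB \<chi> E') (fibB \<phi> E) (restrict \<psi> (fib \<chi> (fst E') 0)) (e0 (fibB \<phi> E) s0)"
    by (rule epiD(2)[OF epi0 fibB_obj[OF o' ch] fibB_obj[OF o v(1)] fsB_hom_restrict_fib[OF o' psi v(1), folded \<chi>_def] v(2)])
  have ni: "ET i (fib \<chi> (fst E') (int i + 1)) (free_mor fsA_hom fsA_comp (map fsA_gen (MS i)) (fib \<chi> (fst E') (int i + 1))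
          (fib \<phi> (fst E) (int i + 1)) (restrict \<psi> (fib \<chi> (fst E') (int i + 1))) (ss ! i))
     = snd (Ms ! i) (fib \<chi> (fst E') (int i + 1)) (fib \<phi> (fst E) (int i + 1)) (restrict \<psi> (fib \<chi> (fst E') (int i + 1)))
          (ET i (fib \<phi> (fst E) (int i + 1)) (ss ! i))" if i: "i < p" for i
    by (rule epiD(2)[OF epii[rule_format, OF i] fib_fsA_obj[OF o' ch] fib_fsA_obj[OF o v(1)] fsA_hom_restrict_fib[OF psi, of \<phi>, folded \<chi>_def]])
       (use i v(4) in auto)
  show ?thesis
    using n0 ni v(3) unfolding tau term_pullback_def term_map_def term_push_def \<chi>_def
    by (auto intro!: nth_equalityI)
qed

lemma eta_natural:
  assumes oX: "fsB_obj X" and oY: "fsB_obj Y" and f: "f \<in> fsB_hom X Y" and u: "u \<in> R_coords Y"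
  shows "eta X (F_mor X Y f u) = Rmor X Y f (eta Y u)"
proof -
  obtain t where t: "t \<in> R_free Y" "u = coords Y t" using u by (auto simp: R_coords_def)
  obtain L where L: "\<forall>\<tau>\<in>set L. good_free_term Y \<tau>" "t = terms_sum L"
    using R_free_terms_sum[OF oY t(1)] by blast
  have LF: "\<forall>\<tau>\<in>set (map (term_pullback X Y f) L). good_free_term X \<tau>"
    using L(1) good_term_pullback[OF oX oY f] by auto
  have LH: "\<forall>\<tau>\<in>set (map (term_map e0 ET p Y) L). good_R_term Y \<tau>"
    using L(1) good_term_map[OF oY] by auto
  have "eta X (F_mor X Y f u) = eta X (coords X (terms_sum (map (term_pullback X Y f) L)))"
    unfolding t(2) L(2) F_mor_coords_terms_sum[OF oX oY f L(1)] ..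
  also have "\<dots> = terms_sum (map (term_map e0 ET p X) (map (term_pullback X Y f) L))"
    unfolding eta_coords[OF oX terms_sum_in_R_free[OF LF]] tensor_map_R_free[OF oX LF] ..
  also have "\<dots> = terms_sum (map (term_push X Y f) (map (term_map e0 ET p Y) L))"
    using term_map_pullback[OF oX oY f] L(1) by (simp add: map_map o_def cong: map_cong)
  also have "\<dots> = Rmor X Y f (terms_sum (map (term_map e0 ET p Y) L))"
    by (rule Rmor_terms_sum[OF oX oY f LH, symmetric])
  also have "\<dots> = Rmor X Y f (eta Y u)"
    unfolding t(2) L(2) eta_coords[OF oY terms_sum_in_R_free[OF L(1)]] tensor_map_R_free[OF oY L(1)] ..
  finally show ?thesis .
qed

theorem eta_epi: "is_epi fsB_obj fsB_hom R_coords F_mor (R_ob Nob Ms) Rmor eta"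
proof -
  have 1: "\<forall>X. fsB_obj X \<longrightarrow> fn_linear_on (R_coords X) (R_ob Nob Ms X) (eta X) \<and> eta X ` R_coords X = R_ob Nob Ms X"
    using eta_linear eta_surj by blast
  have 2: "\<forall>X Y f. fsB_obj X \<longrightarrow> fsB_obj Y \<longrightarrow> f \<in> fsB_hom X Y \<longrightarrow>
        (\<forall>v\<in>R_coords Y. eta X (F_mor X Y f v) = Rmor X Y f (eta Y v))"
    using eta_natural by blast
  show ?thesis unfolding is_epi_def using 1 2 by blast
qed

lemma glued_degs_le:
  assumes ms0d: "\<forall>m\<in>set ms0. m \<le> d" and lcs: "length cs = p" and MSc: "\<forall>i<p. \<forall>m\<in>set (MS i). m \<le> cs ! i"
  shows "\<forall>m\<in>set glued_degs. 0 \<le> m \<and> m \<le> d + sum_list cs"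
proof
  fix m assume "m \<in> set glued_degs"
  then obtain J where J: "J \<in> set tuples" "m = block_start (degs J) (Suc p)" by (auto simp: glued_degs_def)
  have Jp: "J ! 0 < length ms0" "\<forall>i<p. J ! Suc i < length (MS i)" using J(1) mem_tuples by auto
  have "m = degs J 0 + (\<Sum>i<p. degs J (Suc i))" unfolding J(2) block_start_def sum.lessThan_Suc_shift by simp
  also have "\<dots> = ms0 ! (J ! 0) + (\<Sum>i<p. MS i ! (J ! Suc i))" by (simp add: degs_simps)
  also have "\<dots> \<le> d + (\<Sum>i<p. cs ! i)"
  proof (rule add_mono)
    show "ms0 ! (J ! 0) \<le> d" using ms0d Jp(1) by simp
    show "(\<Sum>i<p. MS i ! (J ! Suc i)) \<le> (\<Sum>i<p. cs ! i)"
      by (rule sum_mono) (use MSc Jp(2) in auto)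
  qed
  also have "(\<Sum>i<p. cs ! i) = sum_list cs"
    using lcs by (simp add: sum_list_sum_nth atLeast0LessThan)
  finally show "0 \<le> m \<and> m \<le> d + sum_list cs" by simp
qed

theorem R_ob_small:
  assumes "\<forall>m\<in>set ms0. m \<le> d" and "length cs = p" and "\<forall>i<p. \<forall>m\<in>set (MS i). m \<le> cs ! i"
  shows "fsB_small (d + sum_list cs) (R_ob Nob Ms) Rmor"
  unfolding small_def
  using glued_degs_le[OF assms] R_coords_submodule eta_epi by (auto simp: F_mor_def glued_gens_def)

end

lemma small_choice:
  assumes "\<forall>i<n. small obj hom cmp gen lo (c i) (Mob i) (Mmor i)"
  obtains ms S \<eta> where "\<forall>i<n. (\<forall>m\<in>set (ms i). lo \<le> m \<and> m \<le> c i) \<and>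
      is_submodule obj hom (free_ob hom (map gen (ms i))) (free_mor hom cmp (map gen (ms i))) (S i) \<and>
      is_epi obj hom (S i) (free_mor hom cmp (map gen (ms i))) (Mob i) (Mmor i) (\<eta> i)"
  using assms unfolding small_def by metis

theorem mainTheorem11:
  fixes Nob :: "fsB_ob \<Rightarrow> ('b \<Rightarrow> complex) set"
    and Nmor :: "fsB_ob \<Rightarrow> fsB_ob \<Rightarrow> (int \<Rightarrow> int) \<Rightarrow> ('b \<Rightarrow> complex) \<Rightarrow> ('b \<Rightarrow> complex)"
    and Ms :: "'a fsA_mod list"
    and cs :: "nat list"
    and d :: nat
    and Rmor :: "fsB_ob \<Rightarrow> fsB_ob \<Rightarrow> (int \<Rightarrow> int) \<Rightarrow> ((int \<Rightarrow> int) \<times> 'b \<times> 'a list \<Rightarrow> complex)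
                   \<Rightarrow> ((int \<Rightarrow> int) \<times> 'b \<times> 'a list \<Rightarrow> complex)"
  assumes "fsB_module Nob Nmor"
    and "fsB_small d Nob Nmor"
    and "length cs = length Ms"
    and "\<forall>i<length Ms. fsA_module (fst (Ms ! i)) (snd (Ms ! i))"
    and "\<forall>i<length Ms. fsA_small (cs ! i) (fst (Ms ! i)) (snd (Ms ! i))"
    and "R_mor_spec Nob Nmor Ms Rmor"
  shows "fsB_small (d + sum_list cs) (R_ob Nob Ms) Rmor"
proof -
  obtain ms0 S0 e0 where N: "\<forall>m\<in>set ms0. 0 \<le> m \<and> m \<le> d"
    "is_submodule fsB_obj fsB_hom (free_ob fsB_hom (map fsB_gen ms0)) (free_mor fsB_hom fsB_comp (map fsB_gen ms0)) S0"
    "is_epi fsB_obj fsB_hom S0 (free_mor fsB_hom fsB_comp (map fsB_gen ms0)) Nob Nmor e0"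
    using assms(2) unfolding small_def by blast
  obtain MS SS ET where M: "\<forall>i<length Ms. (\<forall>m\<in>set (MS i). 1 \<le> m \<and> m \<le> cs ! i) \<and>
      is_submodule fsA_obj fsA_hom (free_ob fsA_hom (map fsA_gen (MS i))) (free_mor fsA_hom fsA_comp (map fsA_gen (MS i))) (SS i) \<and>
      is_epi fsA_obj fsA_hom (SS i) (free_mor fsA_hom fsA_comp (map fsA_gen (MS i))) (fst (Ms ! i)) (snd (Ms ! i)) (ET i)"
    by (rule small_choice[OF assms(5)])
  interpret small_presentations Nob Nmor Ms Rmor ms0 S0 e0 MS SS ET
    by unfold_locales (use N M assms(6) in auto)
  show ?thesis by (rule R_ob_small) (use N M assms(3) in auto)
qed

end
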